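(* Let $S$ be a finite set, $d\ge 1$, and let $X\subset S^{\mathbb Z^d}$ be an irreducible $\mathbb Z^d$-topological Markov shift such that the tail relation $\mathfrak T(X)$ is topologically transitive on $X$. Let $\mathbb G$ be a countable Abelian group and $G:S\to\mathbb G$. If $p$ is a Borel probability measure on $X$ which is global, $\mathfrak T(X)$-nonsingular, and $\mathfrak T(X)[\Psi_G]$-invariant and $\mathfrak T(X)[\Psi_G]$-ergodic, then there is a group homomorphism $H:\mathbb G\to\mathbb R$ such that $p$ is $H\circ G$-conformal, i.e. for every Borel bijection $\Phi:B\to C$ between Borel sets $B,C\subset X$ with $(x,\Phi(x))\in\mathfrak T(X)$ for all $x\in B$, one has $\frac{d\,p\circ\Phi}{dp}(x)=e^{H(\Psi_G(x,\Phi(x)))}$ for $p$-a.e. $x\in B$.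
   Context: Notation: for $n\in\mathbb Z^d$, $\|n\|=\max_k|n_k|$ and $B(n,r)=\{k\in\mathbb Z^d:\|k-n\|\le r\}$. For $x\in S^{\mathbb Z^d}$ and $\Lambda\subset\mathbb Z^d$, $x_\Lambda\in S^\Lambda$ is the restriction. The shift is $(T_kx)_n=x_{n+k}$. A $\mathbb Z^d$-topological Markov shift (TMS) is a set of the form $X=\{x\in S^{\mathbb Z^d}:(x_k,(x_{k+j})_{j\in\partial B(0,1)})\in A\ \forall k\in\mathbb Z^d\}$ for some $A\subset S\times S^{\partial B(0,1)}$, where $\partial B(0,1)=B(0,1)\setminus\{0\}$. $X$ is irreducible if for all nonempty open $U,V\subset X$ there is $k\in\mathbb Z^d$ with $U\cap T_kV\ne\emptyset$. The tail relation is $\mathfrak T(X)=\{(x,y)\in X\times X:\exists F\subset\mathbb Z^d\text{ finite},\ x_{F^c}=y_{F^c}\}$. For $G:S\to\mathbb G$ and $(x,y)\in\mathfrak T(X)$, $\Psi_G(x,y)=\sum_{j\in\mathbb Z^d}(G(y_j)-G(x_j))$ (a finite sum), and $\mathfrak T(X)[\Psi_G]=\{(x,y)\in\mathfrak T(X):\Psi_G(x,y)=0\}$. For a countable Borel equivalence relation $\mathcal R$ on $X$: $\mathcal R$ is topologically transitive if $(U\times V)\cap\mathcal R\neq\emptyset$ for all nonempty open $U,V\subset X$; $p$ is $\mathcal R$-nonsingular if $p(A)=0$ implies $p(\mathcal R(A))=0$, where $\mathcal R(A)=\{y:\exists x\in A,(x,y)\in\mathcal R\}$; $p$ is $\mathcal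 R$-invariant if it is nonsingular and every Borel bijection $\Phi:B\to C$ with $(x,\Phi(x))\in\mathcal R$ preserves $p$ (i.e. $p\circ\Phi=p$ on $B$); $p$ is $\mathcal R$-ergodic if every Borel set $A$ with ($x\in A$, $(x,y)\in\mathcal R$ $\Rightarrow y\in A$) has $p(A)\in\{0,1\}$. $p$ is global if every nonempty open subset of $X$ has positive $p$-measure. *)

theory Defs
  imports "HOL-Analysis.Analysis" "HOL-Probability.Probability"
begin

(* Lattice sites of Z^d are functions 'd \<Rightarrow> int, 'd an arbitrary finite (nonempty) index type
   with CARD('d) = d \<ge> 1.  The alphabet S is a finite type 'a. *)

type_synonym 'd site = "'d \<Rightarrow> int"
type_synonym ('d,'a) config = "'d site \<Rightarrow> 'a"

definition site_add :: "'d site \<Rightarrow> 'd site \<Rightarrow> 'd site" where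
  "site_add n k = (\<lambda>i. n i + k i)"

definition nbhd :: "'d::finite site set" where
  "nbhd = {j. j \<noteq> (\<lambda>_. 0) \<and> (\<forall>i. \<bar>j i\<bar> \<le> 1)}"

definition shift :: "'d site \<Rightarrow> ('d,'a) config \<Rightarrow> ('d,'a) config" where
  "shift k x = (\<lambda>n. x (site_add n k))"

definition TMS :: "('a \<times> ('d::finite site \<Rightarrow> 'a)) set \<Rightarrow> ('d,'a) config set" where
  "TMS A = {x. \<forall>k. (x k, restrict (\<lambda>j. x (site_add k j)) nbhd) \<in> A}"

definition shift_top :: "('d,'a) config set \<Rightarrow> ('d,'a) config topology" where
  "shift_top X = subtopology (product_topology (\<lambda>_. discrete_topology UNIV) UNIV) X"

definition borel_X :: "('d,'a) config set \<Rightarrow> ('d,'a) config measure" where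
  "borel_X X = sigma X {U. openin (shift_top X) U}"

definition irreducible_TMS :: "('d,'a) config set \<Rightarrow> bool" where
  "irreducible_TMS X \<longleftrightarrow>
     (\<forall>U V. openin (shift_top X) U \<longrightarrow> openin (shift_top X) V \<longrightarrow> U \<noteq> {} \<longrightarrow> V \<noteq> {} \<longrightarrow>
        (\<exists>k. U \<inter> shift k ` V \<noteq> {}))"

definition tail_rel :: "('d,'a) config set \<Rightarrow> (('d,'a) config \<times> ('d,'a) config) set" where
  "tail_rel X = {(x,y). x \<in> X \<and> y \<in> X \<and> finite {n. x n \<noteq> y n}}"

definition Psi :: "('a \<Rightarrow> 'g::ab_group_add) \<Rightarrow> ('d,'a) config \<Rightarrow> ('d,'a) config \<Rightarrow> 'g" where
  "Psi G x y = (\<Sum>j\<in>{n. x n \<noteq> y n}. G (y j) - G (x j))"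

definition tail_rel_Psi :: "('d,'a) config set \<Rightarrow> ('a \<Rightarrow> 'g::ab_group_add)
    \<Rightarrow> (('d,'a) config \<times> ('d,'a) config) set" where
  "tail_rel_Psi X G = {(x,y) \<in> tail_rel X. Psi G x y = 0}"

definition top_transitive :: "('d,'a) config set \<Rightarrow> (('d,'a) config \<times> ('d,'a) config) set \<Rightarrow> bool" where
  "top_transitive X R \<longleftrightarrow>
     (\<forall>U V. openin (shift_top X) U \<longrightarrow> openin (shift_top X) V \<longrightarrow> U \<noteq> {} \<longrightarrow> V \<noteq> {} \<longrightarrow>
        (U \<times> V) \<inter> R \<noteq> {})"

definition borel_bij :: "'x measure \<Rightarrow> 'x set \<Rightarrow> 'x set \<Rightarrow> ('x \<Rightarrow> 'x) \<Rightarrow> bool" where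
  "borel_bij M B C \<Phi> \<longleftrightarrow> B \<in> sets M \<and> C \<in> sets M \<and> bij_betw \<Phi> B C \<and>
     (\<forall>A\<in>sets M. \<Phi> -` A \<inter> B \<in> sets M) \<and>
     (\<forall>A\<in>sets M. A \<subseteq> B \<longrightarrow> \<Phi> ` A \<in> sets M)"

definition partial_iso :: "'x measure \<Rightarrow> ('x \<times> 'x) set \<Rightarrow> 'x set \<Rightarrow> 'x set \<Rightarrow> ('x \<Rightarrow> 'x) \<Rightarrow> bool" where
  "partial_iso M R B C \<Phi> \<longleftrightarrow> borel_bij M B C \<Phi> \<and> (\<forall>x\<in>B. (x, \<Phi> x) \<in> R)"

definition global_measure :: "('d,'a) config set \<Rightarrow> ('d,'a) config measure \<Rightarrow> bool" where
  "global_measure X p \<longleftrightarrow> (\<forall>U. openin (shift_top X) U \<longrightarrow> U \<noteq> {} \<longrightarrow> emeasure p U > 0)"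

definition nonsingular :: "'x measure \<Rightarrow> ('x \<times> 'x) set \<Rightarrow> bool" where
  "nonsingular M R \<longleftrightarrow> (\<forall>A \<in> null_sets M. R `` A \<in> null_sets M)"

definition invariant :: "'x measure \<Rightarrow> ('x \<times> 'x) set \<Rightarrow> bool" where
  "invariant M R \<longleftrightarrow> nonsingular M R \<and>
     (\<forall>B C \<Phi>. partial_iso M R B C \<Phi> \<longrightarrow>
        (\<forall>A\<in>sets M. A \<subseteq> B \<longrightarrow> emeasure M (\<Phi> ` A) = emeasure M A))"

definition ergodic :: "'x measure \<Rightarrow> ('x \<times> 'x) set \<Rightarrow> bool" where
  "ergodic M R \<longleftrightarrow> (\<forall>A\<in>sets M. (\<forall>x y. x \<in> A \<longrightarrow> (x,y) \<in> R \<longrightarrow> y \<in> A) \<longrightarrow>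
      emeasure M A = 0 \<or> emeasure M A = 1)"

(* p is f-conformal for the cocycle f : for each partial isomorphism \<Phi> : B \<rightarrow> C in the tail relation,
   d(p\<circ>\<Phi>)/dp = exp (f x (\<Phi> x)) p-a.e. on B, i.e. p(\<Phi> A) = \<integral>_A exp(f x (\<Phi> x)) dp for Borel A \<subseteq> B *)
definition conformal :: "'x measure \<Rightarrow> ('x \<times> 'x) set \<Rightarrow> ('x \<Rightarrow> 'x \<Rightarrow> real) \<Rightarrow> bool" where
  "conformal M R f \<longleftrightarrow>
     (\<forall>B C \<Phi>. partial_iso M R B C \<Phi> \<longrightarrow>
        (\<forall>A\<in>sets M. A \<subseteq> B \<longrightarrow>
           emeasure M (\<Phi> ` A) = (\<integral>\<^sup>+ x. ennreal (exp (f x (\<Phi> x))) * indicator A x \<partial>M)))"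

end

(* Let f be a partial isomorphism of the tail relation along which the cocycle Psi_G is constant,
   equal to c.  Invariance and ergodicity of p for the kernel of Psi_G imply that any two subsets of
   the domain of f of positive measure contain subsets of equal positive measure related by a
   Psi_G-preserving isomorphism, and f maps these to sets of equal measure.  Hence the density of
   p o f is a.e. constant, and the constant kappa(c) depends only on c.  Composing and inverting
   such isomorphisms shows that the values c that occur form a subgroup on which ln o kappa is
   additive.  The group being countable and the reals divisible, ln o kappa extends to a
   homomorphism H, and splitting an arbitrary partial isomorphism according to the value of Psi_G
   gives d(p o Phi)/dp = exp (H (Psi_G (x, Phi x))). *)

theory Submission
  imports Defs
begin

section \<open>Extending additive maps from subgroups of countable groups\<close>

primrec nat_mult :: "nat \<Rightarrow> 'a::ab_group_add \<Rightarrow> 'a" where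
  "nat_mult 0 g = 0"
| "nat_mult (Suc n) g = g + nat_mult n g"

lemma nat_mult_add: "nat_mult (m + n) g = nat_mult m g + nat_mult n g"
  by (induction m) (simp_all add: add.assoc)

lemma nat_mult_mult: "nat_mult (m * n) g = nat_mult m (nat_mult n g)"
  by (induction m) (simp_all add: nat_mult_add)

lemma nat_mult_diff_right: "nat_mult n (a - b) = nat_mult n a - nat_mult n b"
  by (induction n) (simp_all add: algebra_simps)

definition int_mult :: "int \<Rightarrow> 'a::ab_group_add \<Rightarrow> 'a" where
  "int_mult j g = nat_mult (nat j) g - nat_mult (nat (- j)) g"

lemma int_mult_of_nat_diff: "int_mult (int m - int n) g = nat_mult m g - nat_mult n g"
proof -
  have "nat (int m - int n) + n = nat (- (int m - int n)) + m" by linarith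
  then have "nat_mult (nat (int m - int n)) g + nat_mult n g = nat_mult (nat (- (int m - int n))) g + nat_mult m g"
    by (metis nat_mult_add)
  then show ?thesis unfolding int_mult_def by (simp add: algebra_simps)
qed

lemma int_mult_add: "int_mult (i + j) g = int_mult i g + int_mult j g"
proof -
  obtain a b c d where i: "i = int a - int b" and j: "j = int c - int d"
    by (meson int_diff_cases)
  have "i + j = int (a + c) - int (b + d)" unfolding i j by simp
  then show ?thesis unfolding i j by (simp only: int_mult_of_nat_diff) (simp add: nat_mult_add)
qed

lemma int_mult_mult: "int_mult (i * j) g = int_mult i (int_mult j g)"
proof -
  obtain a b c d where i: "i = int a - int b" and j: "j = int c - int d"
    by (meson int_diff_cases)
  have "i * j = int (a * c + b * d) - int (a * d + b * c)" unfolding i j by (simp add: algebra_simps)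
  then show ?thesis unfolding i j
    by (simp only: int_mult_of_nat_diff) (simp add: nat_mult_add nat_mult_mult nat_mult_diff_right)
qed

lemma int_mult_0 [simp]: "int_mult 0 g = 0"
  and int_mult_1 [simp]: "int_mult 1 g = g"
  and int_mult_uminus: "int_mult (- j) g = - int_mult j g"
  unfolding int_mult_def by simp_all

lemma int_mult_diff: "int_mult (i - j) g = int_mult i g - int_mult j g"
  using int_mult_add[of "i - j" j g] by simp

definition add_subgroup :: "'a::ab_group_add set \<Rightarrow> bool" where
  "add_subgroup K \<longleftrightarrow> 0 \<in> K \<and> (\<forall>a\<in>K. \<forall>b\<in>K. a + b \<in> K) \<and> (\<forall>a\<in>K. - a \<in> K)"

definition additive_on :: "'a::ab_group_add set \<Rightarrow> ('a \<Rightarrow> 'b::ab_group_add) \<Rightarrow> bool" where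
  "additive_on K h \<longleftrightarrow> (\<forall>a\<in>K. \<forall>b\<in>K. h (a + b) = h a + h b)"

lemma add_subgroup_diff: "add_subgroup K \<Longrightarrow> a \<in> K \<Longrightarrow> b \<in> K \<Longrightarrow> a - b \<in> K"
  unfolding add_subgroup_def by (metis diff_conv_add_uminus)

lemma additive_on_diff:
  "add_subgroup K \<Longrightarrow> additive_on K h \<Longrightarrow> a \<in> K \<Longrightarrow> b \<in> K \<Longrightarrow> h (a - b) = h a - h b"
  unfolding additive_on_def by (metis add_subgroup_diff diff_add_cancel eq_diff_eq)

lemma additive_on_zero: "add_subgroup K \<Longrightarrow> additive_on K h \<Longrightarrow> h 0 = 0"
  using additive_on_diff[of K h 0 0] by (simp add: add_subgroup_def)

lemma additive_on_int_mult:
  fixes h :: "'a::ab_group_add \<Rightarrow> 'b::ring_1"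
  assumes K: "add_subgroup K" and h: "additive_on K h" and a: "a \<in> K"
  shows "h (int_mult j a) = of_int j * h a"
proof -
  have n: "nat_mult n a \<in> K \<and> h (nat_mult n a) = of_nat n * h a" for n
  proof (induction n)
    case 0
    then show ?case using additive_on_zero[OF K h] K by (simp add: add_subgroup_def)
  next
    case (Suc n)
    then show ?case using K h a by (auto simp: add_subgroup_def additive_on_def algebra_simps)
  qed
  have "h (int_mult j a) = h (nat_mult (nat j) a) - h (nat_mult (nat (- j)) a)"
    unfolding int_mult_def using additive_on_diff[OF K h] n by blast
  also have "\<dots> = (of_nat (nat j) - of_nat (nat (- j))) * h a"
    using n by (simp add: algebra_simps)
  also have "of_nat (nat j) - of_nat (nat (- j)) = (of_int j :: 'b)"
    by (cases "j \<ge> 0") simp_all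
  finally show ?thesis .
qed

text \<open>The slope is \<open>h (n g) / n\<close> for any \<open>n \<noteq> 0\<close> with \<open>n g \<in> K\<close>; this division is where
  the codomain has to be a field of characteristic zero.\<close>

lemma additive_on_int_multiples_linear:
  fixes h :: "'a::ab_group_add \<Rightarrow> 'b::field_char_0"
  assumes K: "add_subgroup K" and h: "additive_on K h"
  obtains s where "\<And>t. int_mult t g \<in> K \<Longrightarrow> h (int_mult t g) = of_int t * s"
proof (cases "\<exists>n. n \<noteq> 0 \<and> int_mult n g \<in> K")
  case False
  show ?thesis
  proof (rule that[of 0])
    fix t assume "int_mult t g \<in> K"
    then have "t = 0" using False by blast
    then show "h (int_mult t g) = of_int t * 0" using additive_on_zero[OF K h] by simp
  qed
next
  case True
  then obtain n where n: "n \<noteq> 0" "int_mult n g \<in> K" by blast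
  show ?thesis
  proof (rule that[of "h (int_mult n g) / of_int n"])
    fix t assume t: "int_mult t g \<in> K"
    have "of_int n * h (int_mult t g) = h (int_mult n (int_mult t g))"
      using additive_on_int_mult[OF K h t] by simp
    also have "int_mult n (int_mult t g) = int_mult t (int_mult n g)"
      by (metis int_mult_mult mult.commute)
    also have "h \<dots> = of_int t * h (int_mult n g)"
      using additive_on_int_mult[OF K h n(2)] .
    finally show "h (int_mult t g) = of_int t * (h (int_mult n g) / of_int n)"
      using n(1) by (simp add: field_simps)
  qed
qed

lemma add_subgroup_adjoin:
  assumes K: "add_subgroup K"
  shows "add_subgroup {a + int_mult j g | a j. a \<in> K}"
  unfolding add_subgroup_def
proof (intro conjI ballI)
  have "0 = 0 + int_mult 0 g" "0 \<in> K" using K unfolding add_subgroup_def by simp_all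
  then show "0 \<in> {a + int_mult j g | a j. a \<in> K}" by blast
next
  fix x y assume "x \<in> {a + int_mult j g | a j. a \<in> K}" "y \<in> {a + int_mult j g | a j. a \<in> K}"
  then obtain a j b i where "a \<in> K" "b \<in> K" "x = a + int_mult j g" "y = b + int_mult i g" by blast
  moreover have "a + b \<in> K" using K calculation(1,2) unfolding add_subgroup_def by blast
  moreover have "x + y = (a + b) + int_mult (j + i) g"
    using calculation(3,4) by (simp add: int_mult_add algebra_simps)
  ultimately show "x + y \<in> {a + int_mult j g | a j. a \<in> K}" by blast
next
  fix x assume "x \<in> {a + int_mult j g | a j. a \<in> K}"
  then obtain a j where "a \<in> K" "x = a + int_mult j g" by blast
  moreover have "- a \<in> K" using K calculation(1) unfolding add_subgroup_def by blast
  moreover have "- x = (- a) + int_mult (- j) g"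
    using calculation(2) by (simp add: int_mult_uminus)
  ultimately show "- x \<in> {a + int_mult j g | a j. a \<in> K}" by blast
qed

lemma additive_on_extend_by_element:
  fixes h :: "'a::ab_group_add \<Rightarrow> 'b::field_char_0"
  assumes K: "add_subgroup K" and h: "additive_on K h"
  obtains K' h' where "add_subgroup K'" "additive_on K' h'" "K \<subseteq> K'" "g \<in> K'"
    "\<And>a. a \<in> K \<Longrightarrow> h' a = h a"
proof -
  obtain s where s: "\<And>t. int_mult t g \<in> K \<Longrightarrow> h (int_mult t g) = of_int t * s"
    using additive_on_int_multiples_linear[OF K h] by blast
  define K' where "K' = {a + int_mult j g | a j. a \<in> K}"
  define h' where "h' x = (SOME r. \<exists>a j. a \<in> K \<and> x = a + int_mult j g \<and> r = h a + of_int j * s)" for x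
  have well_defined: "h a + of_int j * s = h a' + of_int j' * s"
    if "a \<in> K" "a' \<in> K" "a + int_mult j g = a' + int_mult j' g" for a a' j j'
  proof -
    have "int_mult (j - j') g = a' - a"
      using that(3) by (simp add: int_mult_diff algebra_simps)
    then have "h (a' - a) = of_int (j - j') * s"
      using s[of "j - j'"] add_subgroup_diff[OF K that(2,1)] by simp
    then show ?thesis using additive_on_diff[OF K h that(2,1)] by (simp add: algebra_simps)
  qed
  have h': "h' (a + int_mult j g) = h a + of_int j * s" if "a \<in> K" for a j
  proof -
    have "\<exists>a' j'. a' \<in> K \<and> a + int_mult j g = a' + int_mult j' g \<and> h' (a + int_mult j g) = h a' + of_int j' * s"
      unfolding h'_def by (rule someI_ex) (use that in blast)
    then obtain a' j' where "a' \<in> K" "a + int_mult j g = a' + int_mult j' g"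
      "h' (a + int_mult j g) = h a' + of_int j' * s"
      by blast
    then show ?thesis using well_defined[OF that] by simp
  qed
  have K_add: "a \<in> K \<Longrightarrow> b \<in> K \<Longrightarrow> a + b \<in> K" for a b
    using K unfolding add_subgroup_def by blast
  have K'I: "a + int_mult j g \<in> K'" if "a \<in> K" for a j
    unfolding K'_def using that by blast
  have "add_subgroup K'" unfolding K'_def by (rule add_subgroup_adjoin[OF K])
  moreover have "additive_on K' h'"
    unfolding additive_on_def
  proof (intro ballI)
    fix x y assume "x \<in> K'" "y \<in> K'"
    then obtain a j b i where ab: "a \<in> K" "b \<in> K" "x = a + int_mult j g" "y = b + int_mult i g"
      unfolding K'_def by blast
    then have "x + y = (a + b) + int_mult (j + i) g" by (simp add: int_mult_add algebra_simps)
    then have "h' (x + y) = h (a + b) + of_int (j + i) * s"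
      using h'[OF K_add[OF ab(1,2)]] by simp
    then show "h' (x + y) = h' x + h' y"
      using ab h' h unfolding additive_on_def by (simp add: algebra_simps)
  qed
  moreover have "K \<subseteq> K'" "g \<in> K'"
    using K'I[of _ 0] K'I[of 0 1] K unfolding add_subgroup_def by auto
  moreover have "\<And>a. a \<in> K \<Longrightarrow> h' a = h a"
    using h'[of _ 0] by simp
  ultimately show ?thesis using that by blast
qed

text \<open>Enumerate the countable group and extend one element at a time.\<close>

lemma additive_on_extend_countable:
  fixes h :: "'a::{ab_group_add,countable} \<Rightarrow> 'b::field_char_0"
  assumes K: "add_subgroup K" and h: "additive_on K h"
  obtains H where "\<And>a b. H (a + b) = H a + H b" "\<And>a. a \<in> K \<Longrightarrow> H a = h a"
proof -
  define P where "P n Kh \<longleftrightarrow> add_subgroup (fst Kh) \<and> additive_on (fst Kh) (snd Kh) \<and> (n = 0 \<longrightarrow> Kh = (K, h))"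
    for n :: nat and Kh :: "'a set \<times> ('a \<Rightarrow> 'b)"
  define Q where "Q n Kh Kh' \<longleftrightarrow> fst Kh \<subseteq> fst Kh' \<and> from_nat n \<in> fst Kh' \<and> (\<forall>a\<in>fst Kh. snd Kh' a = snd Kh a)"
    for n :: nat and Kh Kh' :: "'a set \<times> ('a \<Rightarrow> 'b)"
  have "\<exists>Kh. \<forall>n. P n (Kh n) \<and> Q n (Kh n) (Kh (Suc n))"
  proof (rule dependent_nat_choice)
    show "\<exists>x. P 0 x" using K h unfolding P_def by auto
  next
    fix Kh n assume "P n Kh"
    then have "add_subgroup (fst Kh)" "additive_on (fst Kh) (snd Kh)" unfolding P_def by auto
    then obtain K' h' where "add_subgroup K'" "additive_on K' h'" "fst Kh \<subseteq> K'" "from_nat n \<in> K'"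
      "\<And>a. a \<in> fst Kh \<Longrightarrow> h' a = snd Kh a"
      using additive_on_extend_by_element[of "fst Kh" "snd Kh" "from_nat n"] by blast
    then show "\<exists>y. P (Suc n) y \<and> Q n Kh y" unfolding P_def Q_def by (intro exI[of _ "(K', h')"]) auto
  qed
  then obtain Kh where PKh: "\<And>n. P n (Kh n)" and QKh: "\<And>n. Q n (Kh n) (Kh (Suc n))" by blast
  have Kh0: "Kh 0 = (K, h)" using PKh[of 0] unfolding P_def by simp
  have mono: "fst (Kh m) \<subseteq> fst (Kh n) \<and> (\<forall>a\<in>fst (Kh m). snd (Kh n) a = snd (Kh m) a)"
    if "m \<le> n" for m n
    using that
  proof (induction n rule: dec_induct)
    case (step n)
    then show ?case using QKh[of n] unfolding Q_def by auto
  qed simp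
  define H where "H a = snd (Kh (Suc (to_nat a))) a" for a
  have H: "a \<in> fst (Kh n) \<and> H a = snd (Kh n) a" if "Suc (to_nat a) \<le> n" for a n
    using mono[OF that] QKh[of "to_nat a"] unfolding H_def Q_def by auto
  show ?thesis
  proof
    fix a b :: 'a
    define N where "N = Suc (max (to_nat (a + b)) (max (to_nat a) (to_nat b)))"
    have "Suc (to_nat a) \<le> N" "Suc (to_nat b) \<le> N" "Suc (to_nat (a + b)) \<le> N" unfolding N_def by auto
    note H[OF this(1)] H[OF this(2)] H[OF this(3)]
    then show "H (a + b) = H a + H b" using PKh[of N] unfolding P_def additive_on_def by simp
  next
    fix a assume "a \<in> K"
    then show "H a = h a" using mono[of 0 "Suc (to_nat a)"] Kh0 unfolding H_def by simp
  qed
qed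

section \<open>Densities that are constant on homogeneous sets\<close>

lemma emeasure_mult_less_set_nn_integral:
  assumes "finite_measure M" and g[measurable]: "g \<in> borel_measurable M" and A[measurable]: "A \<in> sets M"
    and pos: "emeasure M A > 0" and k: "k \<noteq> \<infinity>" and gt: "\<And>x. x \<in> A \<Longrightarrow> k < g x"
  shows "k * emeasure M A < (\<integral>\<^sup>+x\<in>A. g x \<partial>M)"
proof -
  have "(\<integral>\<^sup>+x\<in>A. k \<partial>M) < (\<integral>\<^sup>+x\<in>A. g x \<partial>M)"
  proof (rule nn_integral_less)
    show "(\<integral>\<^sup>+x\<in>A. k \<partial>M) \<noteq> \<infinity>"
      using k finite_measure.emeasure_finite[OF assms(1)]
      by (simp add: nn_integral_cmult_indicator ennreal_mult_eq_top_iff)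
    show "AE x in M. k * indicator A x \<le> g x * indicator A x"
      using gt by (intro AE_I2) (auto split: split_indicator intro: less_imp_le)
    show "\<not> (AE x in M. g x * indicator A x \<le> k * indicator A x)"
    proof
      assume "AE x in M. g x * indicator A x \<le> k * indicator A x"
      then have "AE x in M. x \<notin> A" by eventually_elim (use gt in \<open>auto simp: not_le[symmetric] split: split_indicator\<close>)
      then show False using pos AE_iff_null_sets[OF A] by auto
    qed
  qed auto
  then show ?thesis by (simp add: nn_integral_cmult_indicator)
qed

lemma set_nn_integral_le_emeasure_mult:
  assumes "A \<in> sets M" "\<And>x. x \<in> A \<Longrightarrow> g x \<le> k"
  shows "(\<integral>\<^sup>+x\<in>A. g x \<partial>M) \<le> k * emeasure M A"
proof -
  have "(\<integral>\<^sup>+x\<in>A. g x \<partial>M) \<le> (\<integral>\<^sup>+x\<in>A. k \<partial>M)"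
    using assms(2) by (intro nn_integral_mono) (auto split: split_indicator)
  then show ?thesis using assms(1) by (simp add: nn_integral_cmult_indicator)
qed

lemma AE_le_const_if_homogeneous:
  fixes g :: "'a \<Rightarrow> ennreal"
  assumes M: "finite_measure M" and g[measurable]: "g \<in> borel_measurable M" and B[measurable]: "B \<in> sets M"
    and avg: "(\<integral>\<^sup>+x\<in>B. g x \<partial>M) = k * emeasure M B" and k: "k \<noteq> \<infinity>"
    and hom: "\<And>S T. S \<in> sets M \<Longrightarrow> T \<in> sets M \<Longrightarrow> S \<subseteq> B \<Longrightarrow> T \<subseteq> B \<Longrightarrow>
      0 < emeasure M S \<Longrightarrow> 0 < emeasure M T \<Longrightarrow> \<exists>Q P. Q \<subseteq> S \<and> P \<subseteq> T \<and> Q \<in> sets M \<and> P \<in> sets M \<and>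
      0 < emeasure M Q \<and> emeasure M Q = emeasure M P \<and> (\<integral>\<^sup>+x\<in>Q. g x \<partial>M) = (\<integral>\<^sup>+x\<in>P. g x \<partial>M)"
  shows "AE x in M. x \<in> B \<longrightarrow> g x \<le> k"
proof -
  define S where "S = {x\<in>B. k < g x}"
  have S[measurable]: "S \<in> sets M"
    unfolding S_def by measurable
  have "emeasure M S = 0"
  proof (rule ccontr)
    assume "emeasure M S \<noteq> 0"
    then have S_pos: "0 < emeasure M S" by (simp add: zero_less_iff_neq_zero)
    have gt: "k * emeasure M Q < (\<integral>\<^sup>+x\<in>Q. g x \<partial>M)" if "Q \<subseteq> S" "Q \<in> sets M" "0 < emeasure M Q" for Q
      using emeasure_mult_less_set_nn_integral[OF M g that(2,3) k] that(1) unfolding S_def by auto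
    show False
    proof (cases "emeasure M (B - S) = 0")
      case False
      then obtain Q P where QP: "Q \<subseteq> S" "P \<subseteq> B - S" "Q \<in> sets M" "P \<in> sets M" "0 < emeasure M Q"
        "emeasure M Q = emeasure M P" "(\<integral>\<^sup>+x\<in>Q. g x \<partial>M) = (\<integral>\<^sup>+x\<in>P. g x \<partial>M)"
        using hom[OF S _ _ _ S_pos, of "B - S"] by (auto simp: S_def zero_less_iff_neq_zero)
      have "(\<integral>\<^sup>+x\<in>P. g x \<partial>M) \<le> k * emeasure M P"
        by (rule set_nn_integral_le_emeasure_mult) (use QP(2,4) in \<open>auto simp: S_def not_less\<close>)
      then show False using gt[OF QP(1,3,5)] QP(6,7) by simp
    next
      case True
      then have null: "B - S \<in> null_sets M" by auto
      have "(\<integral>\<^sup>+x\<in>B. g x \<partial>M) = (\<integral>\<^sup>+x\<in>S. g x \<partial>M)"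
        by (rule nn_integral_cong_AE) (use AE_not_in[OF null] in \<open>auto simp: S_def split: split_indicator\<close>)
      moreover have "emeasure M B = emeasure M S"
        using emeasure_Diff_null_set[OF null B] by (simp add: S_def Diff_Diff_Int Int_absorb1)
      ultimately show False using gt[OF order_refl S S_pos] avg by simp
    qed
  qed
  then have "S \<in> null_sets M" using S by auto
  from AE_not_in[OF this] show ?thesis
    by eventually_elim (auto simp: S_def not_less)
qed

lemma AE_eq_const_if_AE_le_const:
  fixes g :: "'a \<Rightarrow> ennreal"
  assumes M: "finite_measure M" and g[measurable]: "g \<in> borel_measurable M" and B[measurable]: "B \<in> sets M"
    and avg: "(\<integral>\<^sup>+x\<in>B. g x \<partial>M) = k * emeasure M B" and k: "k \<noteq> \<infinity>"
    and le: "AE x in M. x \<in> B \<longrightarrow> g x \<le> k"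
  shows "AE x in M. x \<in> B \<longrightarrow> g x = k"
proof (rule ccontr)
  assume ne: "\<not> (AE x in M. x \<in> B \<longrightarrow> g x = k)"
  have "(\<integral>\<^sup>+x\<in>B. g x \<partial>M) < (\<integral>\<^sup>+x\<in>B. k \<partial>M)"
  proof (rule nn_integral_less)
    show "(\<integral>\<^sup>+x\<in>B. g x \<partial>M) \<noteq> \<infinity>"
      using avg k finite_measure.emeasure_finite[OF M] by (simp add: ennreal_mult_eq_top_iff)
    show "AE x in M. g x * indicator B x \<le> k * indicator B x"
      using le by eventually_elim (auto split: split_indicator)
    show "\<not> (AE x in M. k * indicator B x \<le> g x * indicator B x)"
    proof
      assume "AE x in M. k * indicator B x \<le> g x * indicator B x"
      with le have "AE x in M. x \<in> B \<longrightarrow> g x = k"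
        by eventually_elim (auto split: split_indicator)
      with ne show False ..
    qed
  qed auto
  then show False using avg B by (simp add: nn_integral_cmult_indicator)
qed

section \<open>Borel bijections\<close>

lemma borel_bij_restrict:
  assumes f: "borel_bij M B C f" and B': "B' \<in> sets M" "B' \<subseteq> B"
  shows "borel_bij M B' (f ` B') f"
proof -
  have "f -` A \<inter> B' = (f -` A \<inter> B) \<inter> B'" for A using B'(2) by auto
  moreover have "inj_on f B'" using f B'(2) unfolding borel_bij_def bij_betw_def by (metis inj_on_subset)
  ultimately show ?thesis using f B' unfolding borel_bij_def bij_betw_def by auto
qed

lemma borel_bij_the_inv_into:
  assumes f: "borel_bij M B C f"
  shows "borel_bij M C B (the_inv_into B f)"
proof -
  have inj: "inj_on f B" and C: "C = f ` B" using f unfolding borel_bij_def bij_betw_def by auto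
  have "the_inv_into B f -` A \<inter> C = f ` (A \<inter> B)" for A
    unfolding C using inj by (auto simp: the_inv_into_f_f)
  moreover have "the_inv_into B f ` A = f -` A \<inter> B" if "A \<subseteq> C" for A
    using that inj unfolding C by (auto simp: the_inv_into_f_f intro!: image_eqI[of _ _ "f _"])
  moreover have "bij_betw (the_inv_into B f) C B" using inj C by (simp add: bij_betw_the_inv_into inj_on_imp_bij_betw)
  ultimately show ?thesis using f unfolding borel_bij_def by auto
qed

lemma borel_bij_comp:
  assumes f: "borel_bij M B C f" and g: "borel_bij M C D g"
  shows "borel_bij M B D (g \<circ> f)"
  unfolding borel_bij_def
proof (intro conjI ballI impI)
  have fB: "f ` B = C" using f unfolding borel_bij_def bij_betw_def by auto
  fix A assume A: "A \<in> sets M"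
  have "g -` A \<inter> C \<in> sets M" using g A unfolding borel_bij_def by blast
  then have "f -` (g -` A \<inter> C) \<inter> B \<in> sets M" using f unfolding borel_bij_def by blast
  moreover have "(g \<circ> f) -` A \<inter> B = f -` (g -` A \<inter> C) \<inter> B" using fB by auto
  ultimately show "(g \<circ> f) -` A \<inter> B \<in> sets M" by simp
  assume "A \<subseteq> B"
  then have "f ` A \<in> sets M" "f ` A \<subseteq> C" using f A fB unfolding borel_bij_def by auto
  then show "(g \<circ> f) ` A \<in> sets M" using g unfolding borel_bij_def image_comp[symmetric] by blast
qed (use f g in \<open>auto simp: borel_bij_def intro: bij_betw_trans\<close>)

lemma borel_bij_measurable:
  assumes f: "borel_bij M B C f"
  shows "f \<in> restrict_space M B \<rightarrow>\<^sub>M M"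
proof (rule measurableI)
  have B: "B \<in> sets M" and C: "C \<in> sets M" and fB: "f ` B = C"
    using f unfolding borel_bij_def bij_betw_def by auto
  show "f x \<in> space M" if "x \<in> space (restrict_space M B)" for x
    using that fB sets.sets_into_space[OF C] by (auto simp: space_restrict_space)
  have space: "space (restrict_space M B) = B"
    using sets.sets_into_space[OF B] by (auto simp: space_restrict_space)
  have BB: "B \<inter> space M \<in> sets M" using B by simp
  fix A assume "A \<in> sets M"
  then have "f -` A \<inter> B \<in> sets M" using f unfolding borel_bij_def by blast
  then show "f -` A \<inter> space (restrict_space M B) \<in> sets (restrict_space M B)"
    unfolding space sets_restrict_space_iff[OF BB] by blast
qed

lemma (in sigma_finite_measure) exists_density_of_image:
  assumes f: "borel_bij M B C f"
    and null: "\<And>N. N \<in> sets M \<Longrightarrow> N \<subseteq> B \<Longrightarrow> emeasure M N = 0 \<Longrightarrow> emeasure M (f ` N) = 0"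
  obtains g where "g \<in> borel_measurable M" "\<And>E. E \<in> sets M \<Longrightarrow> (\<integral>\<^sup>+x\<in>E. g x \<partial>M) = emeasure M (f ` (E \<inter> B))"
proof -
  have B: "B \<in> sets M" and C: "C \<in> sets M" and fB: "f ` B = C" and inj: "inj_on f B"
    using f unfolding borel_bij_def bij_betw_def by auto
  define \<nu> where "\<nu> = distr (restrict_space M C) M (the_inv_into B f)"
  have \<nu>: "emeasure \<nu> E = emeasure M (f ` (E \<inter> B))" if "E \<in> sets M" for E
  proof -
    have "the_inv_into B f -` E \<inter> C = f ` (E \<inter> B)"
      unfolding fB[symmetric] using inj by (auto simp: the_inv_into_f_f)
    moreover have "space (restrict_space M C) = C"
      using sets.sets_into_space[OF C] by (auto simp: space_restrict_space)
    moreover have "f ` (E \<inter> B) \<subseteq> C" using fB by auto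
    moreover have "C \<inter> space M \<in> sets M" using C by (metis sets.Int_space_eq2)
    ultimately show ?thesis
      unfolding \<nu>_def using emeasure_distr[OF borel_bij_measurable[OF borel_bij_the_inv_into[OF f]] that]
        emeasure_restrict_space[of C M "f ` (E \<inter> B)"] by simp
  qed
  have sets_\<nu>: "sets \<nu> = sets M" unfolding \<nu>_def by simp
  have "absolutely_continuous M \<nu>"
    unfolding absolutely_continuous_def
  proof
    fix E assume E: "E \<in> null_sets M"
    then have "E \<inter> B \<in> null_sets M" using B by (rule null_set_Int2)
    then have "emeasure M (f ` (E \<inter> B)) = 0" using null by auto
    moreover have E_sets: "E \<in> sets M" using E by auto
    ultimately have "emeasure \<nu> E = 0" using \<nu> by simp
    then show "E \<in> null_sets \<nu>" using E_sets sets_\<nu> by (intro null_setsI) simp_all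
  qed
  then have "density M (RN_deriv M \<nu>) = \<nu>" using sets_\<nu> by (rule density_RN_deriv)
  then show ?thesis
    using that[of "RN_deriv M \<nu>"] emeasure_density[of "RN_deriv M \<nu>" M] \<nu> by simp
qed

lemma borel_bij_id: "B \<in> sets M \<Longrightarrow> borel_bij M B B id"
  unfolding borel_bij_def by auto

section \<open>The cocycle \<open>Psi\<close>\<close>

lemma tail_rel_refl: "x \<in> X \<Longrightarrow> (x, x) \<in> tail_rel X"
  unfolding tail_rel_def by simp

lemma tail_rel_sym: "(x, y) \<in> tail_rel X \<Longrightarrow> (y, x) \<in> tail_rel X"
  unfolding tail_rel_def by (auto simp: eq_commute)

lemma tail_rel_trans: "(x, y) \<in> tail_rel X \<Longrightarrow> (y, z) \<in> tail_rel X \<Longrightarrow> (x, z) \<in> tail_rel X"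
  unfolding tail_rel_def
  by (auto intro: finite_subset[of _ "{n. x n \<noteq> y n} \<union> {n. y n \<noteq> z n}"])

lemma Psi_eq_sum_superset:
  assumes "finite W" "{n. x n \<noteq> y n} \<subseteq> W"
  shows "Psi G x y = (\<Sum>j\<in>W. G (y j) - G (x j))"
  unfolding Psi_def by (rule sum.mono_neutral_left) (use assms in auto)

lemma Psi_cocycle:
  assumes "(x, y) \<in> tail_rel X" "(y, z) \<in> tail_rel X"
  shows "Psi G x z = Psi G x y + Psi G y z"
proof -
  let ?W = "{n. x n \<noteq> y n} \<union> {n. y n \<noteq> z n}"
  have W: "finite ?W" using assms unfolding tail_rel_def by auto
  have "Psi G x z = (\<Sum>j\<in>?W. (G (y j) - G (x j)) + (G (z j) - G (y j)))"
    by (subst Psi_eq_sum_superset[OF W]) auto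
  also have "\<dots> = (\<Sum>j\<in>?W. G (y j) - G (x j)) + (\<Sum>j\<in>?W. G (z j) - G (y j))"
    by (rule sum.distrib)
  also have "\<dots> = Psi G x y + Psi G y z"
    by (subst (1 2) Psi_eq_sum_superset[OF W]) auto
  finally show ?thesis .
qed

lemma Psi_swap: "(x, y) \<in> tail_rel X \<Longrightarrow> Psi G y x = - Psi G x y"
  using Psi_cocycle[of x y X x G] tail_rel_sym[of x y X] by (simp add: Psi_def eq_neg_iff_add_eq_0 add.commute)

lemma tail_rel_Psi_refl: "x \<in> X \<Longrightarrow> (x, x) \<in> tail_rel_Psi X G"
  unfolding tail_rel_Psi_def tail_rel_def Psi_def by simp

lemma tail_rel_Psi_trans:
  assumes "(x, y) \<in> tail_rel_Psi X G" "(y, z) \<in> tail_rel_Psi X G"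
  shows "(x, z) \<in> tail_rel_Psi X G"
proof -
  have r: "(x, y) \<in> tail_rel X" "(y, z) \<in> tail_rel X" and "Psi G x y = 0" "Psi G y z = 0"
    using assms unfolding tail_rel_Psi_def by auto
  then show ?thesis
    unfolding tail_rel_Psi_def using tail_rel_trans[OF r] Psi_cocycle[OF r, of G] by simp
qed

definition Psi_const_iso :: "('d,'a) config measure \<Rightarrow> ('d,'a) config set \<Rightarrow> ('a \<Rightarrow> 'g::ab_group_add) \<Rightarrow> 'g
    \<Rightarrow> (('d,'a) config \<Rightarrow> ('d,'a) config) \<Rightarrow> ('d,'a) config set \<Rightarrow> ('d,'a) config set \<Rightarrow> bool" where
  "Psi_const_iso M X G c f B C \<longleftrightarrow> partial_iso M (tail_rel X) B C f \<and> (\<forall>x\<in>B. Psi G x (f x) = c)"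

lemma partial_iso_tail_rel_Psi_iff:
  "partial_iso M (tail_rel_Psi X G) B C f \<longleftrightarrow> Psi_const_iso M X G 0 f B C"
  unfolding Psi_const_iso_def partial_iso_def tail_rel_Psi_def by auto

lemma Psi_const_isoI:
  "borel_bij M B C f \<Longrightarrow> (\<And>x. x \<in> B \<Longrightarrow> (x, f x) \<in> tail_rel X \<and> Psi G x (f x) = c)
    \<Longrightarrow> Psi_const_iso M X G c f B C"
  unfolding Psi_const_iso_def partial_iso_def by blast

lemma Psi_const_isoD:
  assumes "Psi_const_iso M X G c f B C"
  shows "borel_bij M B C f" and "x \<in> B \<Longrightarrow> (x, f x) \<in> tail_rel X" and "x \<in> B \<Longrightarrow> Psi G x (f x) = c"
  using assms unfolding Psi_const_iso_def partial_iso_def by blast+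

lemma Psi_const_iso_image: "Psi_const_iso M X G c f B C \<Longrightarrow> f ` B = C"
  using Psi_const_isoD(1) unfolding borel_bij_def bij_betw_def by blast

lemma Psi_const_iso_restrict:
  "Psi_const_iso M X G c f B C \<Longrightarrow> B' \<in> sets M \<Longrightarrow> B' \<subseteq> B \<Longrightarrow> Psi_const_iso M X G c f B' (f ` B')"
  by (rule Psi_const_isoI) (auto dest: Psi_const_isoD intro: borel_bij_restrict)

lemma Psi_const_iso_comp:
  assumes f: "Psi_const_iso M X G c f B C" and g: "Psi_const_iso M X G d g C D"
  shows "Psi_const_iso M X G (c + d) (g \<circ> f) B D"
proof (rule Psi_const_isoI)
  show "borel_bij M B D (g \<circ> f)"
    using borel_bij_comp[OF Psi_const_isoD(1)[OF f] Psi_const_isoD(1)[OF g]] .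
  fix x assume x: "x \<in> B"
  then have "f x \<in> C"
    using Psi_const_isoD(1)[OF f] unfolding borel_bij_def bij_betw_def by blast
  then have r: "(x, f x) \<in> tail_rel X" "(f x, g (f x)) \<in> tail_rel X"
    using Psi_const_isoD(2)[OF f x] Psi_const_isoD(2)[OF g] by auto
  show "(x, (g \<circ> f) x) \<in> tail_rel X \<and> Psi G x ((g \<circ> f) x) = c + d"
    using tail_rel_trans[OF r] Psi_cocycle[OF r, of G] Psi_const_isoD(3)[OF f x]
      Psi_const_isoD(3)[OF g \<open>f x \<in> C\<close>] by (simp del: Psi_def)
qed

lemma Psi_const_iso_inv:
  assumes f: "Psi_const_iso M X G c f B C"
  shows "Psi_const_iso M X G (- c) (the_inv_into B f) C B"
proof (rule Psi_const_isoI)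
  have bb: "borel_bij M B C f" by (rule Psi_const_isoD(1)[OF f])
  then show "borel_bij M C B (the_inv_into B f)" by (rule borel_bij_the_inv_into)
  have inj: "inj_on f B" and C: "C = f ` B" using bb unfolding borel_bij_def bij_betw_def by auto
  fix y assume "y \<in> C"
  then obtain x where x: "x \<in> B" "y = f x" using C by blast
  have "the_inv_into B f y = x" using the_inv_into_f_f[OF inj x(1)] x(2) by simp
  then show "(y, the_inv_into B f y) \<in> tail_rel X \<and> Psi G y (the_inv_into B f y) = - c"
    using tail_rel_sym[OF Psi_const_isoD(2)[OF f x(1)]] Psi_swap[OF Psi_const_isoD(2)[OF f x(1)], of G]
      Psi_const_isoD(3)[OF f x(1)] x(2) by (simp del: Psi_def)
qed

lemma Psi_const_iso_comp_via:
  assumes f1: "Psi_const_iso M X G c1 f1 B1 C1" and \<tau>: "Psi_const_iso M X G 0 \<tau> Q P"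
    and f2: "Psi_const_iso M X G c2 f2 B2 C2" and QP: "Q \<subseteq> C1" "P \<subseteq> B2"
  defines "D \<equiv> the_inv_into B1 f1 ` Q"
  shows "Psi_const_iso M X G (c1 + c2) (f2 \<circ> \<tau> \<circ> f1) D (f2 ` P)" and "f1 ` D = Q" and "D \<subseteq> B1"
proof -
  have f1_inv: "Psi_const_iso M X G (- c1) (the_inv_into B1 f1) C1 B1" by (rule Psi_const_iso_inv[OF f1])
  have Q: "Q \<in> sets M" and P: "P \<in> sets M"
    using Psi_const_isoD(1)[OF \<tau>] unfolding borel_bij_def by auto
  have D_sets: "D \<in> sets M"
    using Psi_const_isoD(1)[OF f1_inv] QP(1) Q unfolding D_def borel_bij_def by auto
  show D_sub: "D \<subseteq> B1"
    using Psi_const_iso_image[OF f1_inv] QP(1) unfolding D_def by auto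
  have "f1 (the_inv_into B1 f1 y) = y" if "y \<in> Q" for y
    using that QP(1) Psi_const_isoD(1)[OF f1] f_the_inv_into_f
    unfolding borel_bij_def bij_betw_def by fastforce
  then show f1D: "f1 ` D = Q" unfolding D_def image_image by simp
  have "Psi_const_iso M X G c1 f1 D Q"
    using Psi_const_iso_restrict[OF f1 D_sets D_sub] unfolding f1D .
  from Psi_const_iso_comp[OF this Psi_const_iso_comp[OF \<tau> Psi_const_iso_restrict[OF f2 P QP(2)]]]
  show "Psi_const_iso M X G (c1 + c2) (f2 \<circ> \<tau> \<circ> f1) D (f2 ` P)"
    by (simp add: comp_assoc)
qed

section \<open>Borel structure of Markov shifts\<close>

abbreviation discrete_product :: "('d,'a) config topology" where
  "discrete_product \<equiv> product_topology (\<lambda>_. discrete_topology UNIV) UNIV"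

lemma openin_discrete_product_cylinder:
  assumes "finite W"
  shows "openin discrete_product {y. \<forall>n\<in>W. y n = x n}"
  using assms
proof (induction W rule: finite_induct)
  case empty
  then show ?case using openin_topspace[of discrete_product] by (simp add: PiE_UNIV_domain)
next
  case (insert n W)
  have "openin discrete_product {y \<in> topspace discrete_product. y n \<in> {x n}}"
    by (rule openin_continuous_map_preimage[OF continuous_map_product_projection]) auto
  moreover have "{y. \<forall>m\<in>insert n W. y m = x m} = {y \<in> topspace discrete_product. y n \<in> {x n}} \<inter> {y. \<forall>m\<in>W. y m = x m}"
    by (auto simp: PiE_UNIV_domain)
  ultimately show ?case using insert.IH by (simp only:) (rule openin_Int)
qed

lemma openin_shift_top_subset: "openin (shift_top X) U \<Longrightarrow> U \<subseteq> X"
  unfolding shift_top_def using openin_subset by fastforce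

lemma space_borel_X [simp]: "space (borel_X X) = X"
  unfolding borel_X_def by (rule space_measure_of) (auto dest: openin_shift_top_subset)

lemma sets_borel_X: "sets (borel_X X) = sigma_sets X {U. openin (shift_top X) U}"
  unfolding borel_X_def by (rule sets_measure_of) (auto dest: openin_shift_top_subset)

lemma openin_discrete_product_in_borel_X:
  assumes "openin discrete_product U"
  shows "U \<inter> X \<in> sets (borel_X X)"
proof -
  have "openin (shift_top X) (U \<inter> X)"
    unfolding shift_top_def openin_subtopology using assms by blast
  then show ?thesis unfolding sets_borel_X by auto
qed

lemma finitely_determined_in_borel_X:
  assumes "finite W"
    and determined: "\<And>x x'. x \<in> X \<Longrightarrow> x' \<in> X \<Longrightarrow> (\<forall>n\<in>W. x n = x' n) \<Longrightarrow> P x \<Longrightarrow> P x'"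
  shows "{x\<in>X. P x} \<in> sets (borel_X X)"
proof -
  let ?U = "\<Union>x\<in>{x\<in>X. P x}. {y. \<forall>n\<in>W. y n = x n}"
  have "openin discrete_product ?U"
    using openin_discrete_product_cylinder[OF assms(1)] by auto
  moreover have "{x\<in>X. P x} = ?U \<inter> X"
    using determined by (auto simp: eq_commute)
  ultimately show ?thesis using openin_discrete_product_in_borel_X[of ?U X] by simp
qed

lemma coordinate_in_borel_X: "{x\<in>X. x n = a} \<in> sets (borel_X X)"
  by (rule finitely_determined_in_borel_X[of "{n}"]) auto

lemma continuous_map_preimage_in_borel_X:
  assumes f: "continuous_map discrete_product discrete_product f"
    and D: "D \<in> sets (borel_X X)" and fD: "f ` D \<subseteq> X"
    and A: "A \<in> sets (borel_X X)"
  shows "f -` A \<inter> D \<in> sets (borel_X X)"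
proof -
  have DX: "D \<subseteq> X" using sets.sets_into_space[OF D] by simp
  have DD: "D \<inter> space (borel_X X) \<in> sets (borel_X X)" using D DX by (simp add: Int_absorb2)
  have "f \<in> restrict_space (borel_X X) D \<rightarrow>\<^sub>M sigma X {U. openin (shift_top X) U}"
  proof (rule measurable_measure_of)
    show "{U. openin (shift_top X) U} \<subseteq> Pow X"
      by (auto dest: openin_shift_top_subset)
    show "f \<in> space (restrict_space (borel_X X) D) \<rightarrow> X"
      using fD DX by (auto simp: space_restrict_space)
    fix U assume "U \<in> {U. openin (shift_top X) U}"
    then obtain U' where U': "openin discrete_product U'" "U = U' \<inter> X"
      by (auto simp: shift_top_def openin_subtopology)
    have "openin discrete_product (f -` U')"
      using openin_continuous_map_preimage[OF f U'(1)] by (simp add: PiE_UNIV_domain vimage_def)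
    then have "(f -` U' \<inter> X) \<inter> D \<in> sets (borel_X X)"
      using openin_discrete_product_in_borel_X D by blast
    moreover have "f -` U \<inter> space (restrict_space (borel_X X) D) = (f -` U' \<inter> X) \<inter> D"
      using U'(2) fD DX by (auto simp: space_restrict_space)
    ultimately show "f -` U \<inter> space (restrict_space (borel_X X) D) \<in> sets (restrict_space (borel_X X) D)"
      using DX by (simp add: sets_restrict_space_iff[OF DD])
  qed
  moreover have "space (restrict_space (borel_X X) D) = D"
    using DX by (auto simp: space_restrict_space)
  ultimately have "f -` A \<inter> D \<in> sets (restrict_space (borel_X X) D)"
    using measurable_sets[of f _ "borel_X X" A] A unfolding borel_X_def by metis
  then show ?thesis using sets_restrict_space_iff[OF DD] by blast
qed

section \<open>Patches\<close>

definition patch :: "'d site set \<Rightarrow> ('d,'a) config \<Rightarrow> ('d,'a) config \<Rightarrow> ('d,'a) config" where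
  "patch F v x = (\<lambda>n. if n \<in> F then v n else x n)"

definition patch_dom :: "('d,'a) config set \<Rightarrow> 'd site set \<Rightarrow> ('d,'a) config \<Rightarrow> ('d,'a) config
    \<Rightarrow> ('d,'a) config set" where
  "patch_dom X F u v = {x\<in>X. (\<forall>n\<in>F. x n = u n) \<and> patch F v x \<in> X}"

lemma continuous_map_patch:
  fixes F :: "'d site set" and v :: "('d,'a) config"
  shows "continuous_map discrete_product discrete_product (patch F v)"
  unfolding continuous_map_componentwise_UNIV patch_def
proof
  fix k :: "'d site"
  have "continuous_map discrete_product ((\<lambda>_. discrete_topology UNIV) k) (\<lambda>x. x k)"
    by (rule continuous_map_product_projection) simp
  then show "continuous_map discrete_product (discrete_topology UNIV) (\<lambda>x. if k \<in> F then v k else x k)"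
    by (cases "k \<in> F") simp_all
qed

lemma patch_patch: "x \<in> patch_dom X F u v \<Longrightarrow> patch F u (patch F v x) = x"
  unfolding patch_dom_def patch_def by auto

lemma patch_in_patch_dom: "x \<in> patch_dom X F u v \<Longrightarrow> patch F v x \<in> patch_dom X F v u"
  using patch_patch[of x X F u v] unfolding patch_dom_def by (auto simp: patch_def)

lemma bij_betw_patch: "bij_betw (patch F v) (patch_dom X F u v) (patch_dom X F v u)"
  by (rule bij_betw_byWitness[where f' = "patch F u"]) (auto intro: patch_patch patch_in_patch_dom)

definition cube :: "'d::finite site \<Rightarrow> int \<Rightarrow> 'd site set" where
  "cube m r = {k. \<forall>i. \<bar>k i - m i\<bar> \<le> r}"

lemma finite_cube: "finite (cube m r)"
proof -
  have "k \<in> cube m r \<longleftrightarrow> k \<in> Pi\<^sub>E UNIV (\<lambda>i. {m i - r .. m i + r})" for k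
    unfolding cube_def PiE_UNIV_domain Pi_iff by (auto simp: abs_le_iff) (smt (verit))+
  then have "cube m r = Pi\<^sub>E UNIV (\<lambda>i. {m i - r .. m i + r})" by blast
  then show ?thesis by (simp add: finite_PiE)
qed

text \<open>Only sites within distance 1 of \<open>F\<close> see the patch, and their neighbourhoods lie within
  distance 2 of \<open>F\<close>.\<close>

lemma patch_in_TMS_local:
  fixes A :: "('a \<times> ('d::finite site \<Rightarrow> 'a)) set"
  assumes x': "x' \<in> TMS A" and y: "patch F v x \<in> TMS A"
    and agree: "\<forall>n\<in>(\<Union>m\<in>F. cube m 2). x n = x' n"
  shows "patch F v x' \<in> TMS A"
  unfolding TMS_def
proof (intro CollectI allI)
  fix k :: "'d site"
  let ?pattern = "\<lambda>z. (z k, restrict (\<lambda>j. z (site_add k j)) nbhd)"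
  have near_j: "\<bar>site_add k j i - m i\<bar> \<le> r + 1" if "j \<in> nbhd" "\<bar>k i - m i\<bar> \<le> r" for j i m r
  proof -
    have "\<bar>j i\<bar> \<le> 1" using that(1) unfolding nbhd_def by auto
    then show ?thesis using that(2) unfolding site_add_def by (auto simp: abs_le_iff)
  qed
  show "?pattern (patch F v x') \<in> A"
  proof (cases "\<exists>m\<in>F. k \<in> cube m 1")
    case True
    then obtain m where m: "m \<in> F" "k \<in> cube m 1" by blast
    have "k \<in> cube m 2"
      using m(2) unfolding cube_def by (auto intro: order_trans[of _ 1 2])
    moreover have "site_add k j \<in> cube m 2" if "j \<in> nbhd" for j
      using near_j[OF that, of _ m 1] m(2) unfolding cube_def by simp
    ultimately have "?pattern (patch F v x') = ?pattern (patch F v x)"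
      using agree m(1) nbhd_def by (auto simp: patch_def intro!: restrict_ext)
    then show ?thesis using y unfolding TMS_def by simp
  next
    case False
    have "k \<notin> F" using False unfolding cube_def by fastforce
    moreover have "site_add k j \<notin> F" if "j \<in> nbhd" for j
    proof -
      have "k \<in> cube (site_add k j) 1" using that unfolding cube_def nbhd_def site_add_def by auto
      then show ?thesis using False by blast
    qed
    ultimately have "?pattern (patch F v x') = ?pattern x'"
      by (auto simp: patch_def intro!: restrict_ext)
    then show ?thesis using x' unfolding TMS_def by simp
  qed
qed

lemma patch_dom_in_borel_X:
  fixes A :: "('a \<times> ('d::finite site \<Rightarrow> 'a)) set"
  assumes F: "finite F"
  shows "patch_dom (TMS A) F u v \<in> sets (borel_X (TMS A))"
  unfolding patch_dom_def
proof (rule finitely_determined_in_borel_X)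
  show "finite (\<Union>m\<in>F. cube m 2)" using F finite_cube by blast
  fix x x' assume x': "x' \<in> TMS A" and agree: "\<forall>n\<in>(\<Union>m\<in>F. cube m 2). x n = x' n"
    and x: "(\<forall>n\<in>F. x n = u n) \<and> patch F v x \<in> TMS A"
  have "\<forall>n\<in>F. x' n = u n"
  proof
    fix n assume n: "n \<in> F"
    have "n \<in> cube n 2" unfolding cube_def by simp
    then have "n \<in> (\<Union>m\<in>F. cube m 2)" using n by blast
    then have "x n = x' n" using agree by blast
    then show "x' n = u n" using x n by simp
  qed
  moreover have "patch F v x' \<in> TMS A" using patch_in_TMS_local[OF x' _ agree] x by blast
  ultimately show "(\<forall>n\<in>F. x' n = u n) \<and> patch F v x' \<in> TMS A" by blast
qed

lemma borel_bij_patch: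
  fixes A :: "('a \<times> ('d::finite site \<Rightarrow> 'a)) set"
  assumes X: "X = TMS A" and F: "finite F"
  shows "borel_bij (borel_X X) (patch_dom X F u v) (patch_dom X F v u) (patch F v)"
  unfolding borel_bij_def
proof (intro conjI ballI impI)
  show D: "patch_dom X F u v \<in> sets (borel_X X)" and D': "patch_dom X F v u \<in> sets (borel_X X)"
    using patch_dom_in_borel_X[OF F] X by simp_all
  show "bij_betw (patch F v) (patch_dom X F u v) (patch_dom X F v u)" by (rule bij_betw_patch)
  have into: "patch F w ` patch_dom X F w' w \<subseteq> X" for w w' by (auto simp: patch_dom_def)
  fix B assume B: "B \<in> sets (borel_X X)"
  show "patch F v -` B \<inter> patch_dom X F u v \<in> sets (borel_X X)"
    by (rule continuous_map_preimage_in_borel_X[OF continuous_map_patch D into B])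
  assume BD: "B \<subseteq> patch_dom X F u v"
  have "patch F v ` B = patch F u -` B \<inter> patch_dom X F v u"
  proof (intro equalityI subsetI)
    fix y assume "y \<in> patch F u -` B \<inter> patch_dom X F v u"
    then have "patch F u y \<in> B" "patch F v (patch F u y) = y" using patch_patch by auto
    then show "y \<in> patch F v ` B" by (metis image_eqI)
  next
    fix y assume "y \<in> patch F v ` B"
    then obtain x where "x \<in> B" "y = patch F v x" by blast
    then show "y \<in> patch F u -` B \<inter> patch_dom X F v u"
      using BD patch_patch[of x X F u v] patch_in_patch_dom[of x X F u v] by auto
  qed
  moreover have "patch F u -` B \<inter> patch_dom X F v u \<in> sets (borel_X X)"
    by (rule continuous_map_preimage_in_borel_X[OF continuous_map_patch D' into B])
  ultimately show "patch F v ` B \<in> sets (borel_X X)" by simp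
qed

lemma patch_in_tail_rel: "finite F \<Longrightarrow> x \<in> patch_dom X F u v \<Longrightarrow> (x, patch F v x) \<in> tail_rel X"
  unfolding tail_rel_def patch_dom_def
  by (auto intro: finite_subset[of _ F] simp: patch_def)

lemma Psi_patch:
  assumes "finite F" "x \<in> patch_dom X F u v"
  shows "Psi G x (patch F v x) = (\<Sum>j\<in>F. G (v j) - G (u j))"
proof -
  have "Psi G x (patch F v x) = (\<Sum>j\<in>F. G (patch F v x j) - G (x j))"
    by (rule Psi_eq_sum_superset[OF assms(1)]) (auto simp: patch_def)
  also have "\<dots> = (\<Sum>j\<in>F. G (v j) - G (u j))"
    using assms(2) by (intro sum.cong) (auto simp: patch_dom_def patch_def)
  finally show ?thesis .
qed

definition patches :: "('d site set \<times> ('d,'a) config \<times> ('d,'a) config) set" where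
  "patches = {(F, u, v). finite F \<and> u \<in> F \<rightarrow>\<^sub>E UNIV \<and> v \<in> F \<rightarrow>\<^sub>E UNIV}"

lemma countable_patches:
  "countable (patches :: ('d::finite site set \<times> ('d,'a::countable) config \<times> ('d,'a) config) set)"
proof -
  have "patches \<subseteq> (\<Union>F\<in>{F :: 'd site set. finite F}. {F} \<times> (F \<rightarrow>\<^sub>E (UNIV :: 'a set)) \<times> (F \<rightarrow>\<^sub>E (UNIV :: 'a set)))"
    unfolding patches_def by auto
  moreover have "countable (\<Union>F\<in>{F :: 'd site set. finite F}. {F} \<times> (F \<rightarrow>\<^sub>E (UNIV :: 'a set)) \<times> (F \<rightarrow>\<^sub>E (UNIV :: 'a set)))"
    by (intro countable_UN[OF countable_Collect_finite] countable_SIGMA countable_PiE) auto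
  ultimately show ?thesis by (rule countable_subset)
qed

lemma tail_rel_eq_patch:
  assumes "(x, y) \<in> tail_rel X"
  obtains F u v where "(F, u, v) \<in> patches" "x \<in> patch_dom X F u v" "y = patch F v x"
proof
  let ?F = "{n. x n \<noteq> y n}"
  show "(?F, restrict x ?F, restrict y ?F) \<in> patches"
    using assms unfolding patches_def tail_rel_def by auto
  show "y = patch ?F (restrict y ?F) x" by (auto simp: patch_def)
  then show "x \<in> patch_dom X ?F (restrict x ?F) (restrict y ?F)"
    using assms unfolding patch_dom_def tail_rel_def by auto
qed

lemma borel_bij_coordinate_sets:
  fixes X :: "('d,'a) config set"
  assumes sets_M: "sets M = sets (borel_X X)" and f: "borel_bij M B C f"
  shows "{x\<in>B. x n = a} \<in> sets M" and "{x\<in>B. f x n = a} \<in> sets M"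
proof -
  have B: "B \<in> sets M" and C: "C \<in> sets M" and fB: "f ` B = C"
    using f unfolding borel_bij_def bij_betw_def by auto
  have BX: "B \<subseteq> X" and CX: "C \<subseteq> X"
    using sets.sets_into_space[OF B] sets.sets_into_space[OF C] sets_eq_imp_space_eq[OF sets_M] by auto
  have coord: "{x\<in>X. x n = a} \<in> sets M" using coordinate_in_borel_X[of X n a] sets_M by simp
  have "{x\<in>B. x n = a} = {x\<in>X. x n = a} \<inter> B" using BX by auto
  then show "{x\<in>B. x n = a} \<in> sets M" using coord B by auto
  have "{x\<in>B. f x n = a} = f -` {x\<in>X. x n = a} \<inter> B" using fB CX by auto
  moreover have "f -` {x\<in>X. x n = a} \<inter> B \<in> sets M"
    using coord f unfolding borel_bij_def by blast
  ultimately show "{x\<in>B. f x n = a} \<in> sets M" by simp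
qed

lemma Psi_level_set_in_sets:
  fixes X :: "('d::finite,'a::countable) config set" and G :: "'a \<Rightarrow> 'g::ab_group_add"
  assumes sets_M: "sets M = sets (borel_X X)" and f: "partial_iso M (tail_rel X) B C f"
  shows "{x\<in>B. Psi G x (f x) = c} \<in> sets M"
proof -
  have bb: "borel_bij M B C f" and tail: "\<And>x. x \<in> B \<Longrightarrow> (x, f x) \<in> tail_rel X"
    using f unfolding partial_iso_def by auto
  define Z where "Z F u v = {x\<in>B. (\<forall>n\<in>F. x n = u n \<and> f x n = v n) \<and> (\<forall>n. n \<notin> F \<longrightarrow> f x n = x n)}"
    for F :: "'d site set" and u v :: "('d,'a) config"
  have Z_sets: "Z F u v \<in> sets M" for F u v
  proof -
    let ?S = "\<lambda>n. if n \<in> F then {x\<in>B. x n = u n} \<inter> {x\<in>B. f x n = v n}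
                  else (\<Union>a. {x\<in>B. x n = a} \<inter> {x\<in>B. f x n = a})"
    have "?S n \<in> sets M" for n
      using borel_bij_coordinate_sets[OF sets_M bb] by auto
    then have "(\<Inter>n. ?S n) \<in> sets M" by (intro sets.countable_INT) blast+
    moreover have "Z F u v = B \<inter> (\<Inter>n. ?S n)" unfolding Z_def by auto
    ultimately show ?thesis using bb unfolding borel_bij_def by auto
  qed
  let ?I = "{(F, u, v) \<in> (patches :: ('d site set \<times> ('d,'a) config \<times> ('d,'a) config) set).
    (\<Sum>j\<in>F. G (v j) - G (u j)) = c}"
  have "{x\<in>B. Psi G x (f x) = c} = (\<Union>(F, u, v)\<in>?I. Z F u v)"
  proof (intro equalityI subsetI)
    fix x assume x: "x \<in> {x\<in>B. Psi G x (f x) = c}"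
    then obtain F u v where P: "(F, u, v) \<in> patches" and D: "x \<in> patch_dom X F u v"
      and fx: "f x = patch F v x"
      using tail_rel_eq_patch[OF tail] by blast
    have "finite F" using P unfolding patches_def by auto
    then have "(F, u, v) \<in> ?I" using P Psi_patch[OF _ D, of G] fx x by simp
    moreover have "x \<in> Z F u v" using x D fx unfolding Z_def patch_dom_def patch_def by auto
    ultimately show "x \<in> (\<Union>(F, u, v)\<in>?I. Z F u v)" by blast
  next
    fix x assume "x \<in> (\<Union>(F, u, v)\<in>?I. Z F u v)"
    then obtain F u v where I: "(F, u, v) \<in> ?I" and x: "x \<in> Z F u v" by blast
    have "finite F" using I unfolding patches_def by auto
    then have "Psi G x (f x) = (\<Sum>j\<in>F. G (f x j) - G (x j))"
      by (rule Psi_eq_sum_superset) (use x in \<open>auto simp: Z_def\<close>)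
    also have "\<dots> = c" using x I unfolding Z_def by (auto intro: sum.cong)
    finally show "x \<in> {x\<in>B. Psi G x (f x) = c}" using x unfolding Z_def by auto
  qed
  moreover have "countable ?I" by (rule countable_subset[OF _ countable_patches]) auto
  then have "(\<Union>(F, u, v)\<in>?I. Z F u v) \<in> sets M"
    by (rule sets.countable_UN'') (auto simp: Z_sets split: prod.splits)
  ultimately show ?thesis by simp
qed

lemma Psi_const_iso_patch:
  fixes A :: "('a \<times> ('d::finite site \<Rightarrow> 'a)) set"
  assumes X: "X = TMS A" and sets_M: "sets M = sets (borel_X X)" and F: "finite F"
  shows "Psi_const_iso M X G (\<Sum>j\<in>F. G (v j) - G (u j)) (patch F v) (patch_dom X F u v) (patch_dom X F v u)"
proof (rule Psi_const_isoI)
  show "borel_bij M (patch_dom X F u v) (patch_dom X F v u) (patch F v)"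
    using borel_bij_patch[OF X F] sets_M unfolding borel_bij_def by simp
  fix x assume "x \<in> patch_dom X F u v"
  then show "(x, patch F v x) \<in> tail_rel X \<and> Psi G x (patch F v x) = (\<Sum>j\<in>F. G (v j) - G (u j))"
    using patch_in_tail_rel[OF F] Psi_patch[OF F] by blast
qed

definition null_patches :: "('a \<Rightarrow> 'g::ab_group_add) \<Rightarrow> ('d site set \<times> ('d,'a) config \<times> ('d,'a) config) set" where
  "null_patches G = {(F, u, v) \<in> patches. (\<Sum>j\<in>F. G (v j) - G (u j)) = 0}"

lemma countable_null_patches:
  "countable (null_patches G :: ('d::finite site set \<times> ('d,'a::countable) config \<times> ('d,'a) config) set)"
  unfolding null_patches_def by (rule countable_subset[OF _ countable_patches]) auto

lemma tail_rel_Psi_Image_eq: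
  "tail_rel_Psi X G `` S = (\<Union>(F, u, v)\<in>null_patches G. patch F v ` (S \<inter> patch_dom X F u v))"
proof (intro equalityI subsetI)
  fix y assume "y \<in> tail_rel_Psi X G `` S"
  then obtain x where x: "x \<in> S" "(x, y) \<in> tail_rel X" "Psi G x y = 0"
    unfolding tail_rel_Psi_def by blast
  obtain F u v where P: "(F, u, v) \<in> patches" and D: "x \<in> patch_dom X F u v" and y: "y = patch F v x"
    using tail_rel_eq_patch[OF x(2)] by blast
  have "finite F" using P unfolding patches_def by auto
  then have "(\<Sum>j\<in>F. G (v j) - G (u j)) = 0"
    using Psi_patch[OF _ D, of G] x(3) y by simp
  then show "y \<in> (\<Union>(F, u, v)\<in>null_patches G. patch F v ` (S \<inter> patch_dom X F u v))"
    using P D x(1) y unfolding null_patches_def by blast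
next
  fix y assume "y \<in> (\<Union>(F, u, v)\<in>null_patches G. patch F v ` (S \<inter> patch_dom X F u v))"
  then obtain F u v x where P: "(F, u, v) \<in> patches" "(\<Sum>j\<in>F. G (v j) - G (u j)) = 0"
    and x: "x \<in> S" "x \<in> patch_dom X F u v" and y: "y = patch F v x"
    unfolding null_patches_def by blast
  have F: "finite F" using P unfolding patches_def by auto
  have "(x, y) \<in> tail_rel X" using patch_in_tail_rel[OF F x(2)] y by simp
  moreover have "Psi G x y = 0" using Psi_patch[OF F x(2), of G] P(2) y by simp
  ultimately have "(x, y) \<in> tail_rel_Psi X G" unfolding tail_rel_Psi_def by blast
  then show "y \<in> tail_rel_Psi X G `` S" using x(1) by blast
qed

lemma Psi_const_iso_null_patch:
  fixes A :: "('a \<times> ('d::finite site \<Rightarrow> 'a)) set"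
  assumes "X = TMS A" "sets M = sets (borel_X X)" "(F, u, v) \<in> null_patches G"
  shows "Psi_const_iso M X G 0 (patch F v) (patch_dom X F u v) (patch_dom X F v u)"
proof -
  have "finite F" "(\<Sum>j\<in>F. G (v j) - G (u j)) = 0"
    using assms(3) unfolding null_patches_def patches_def by auto
  then show ?thesis using Psi_const_iso_patch[OF assms(1,2), of F G v u] by simp
qed

lemma image_patch_in_sets:
  fixes A :: "('a \<times> ('d::finite site \<Rightarrow> 'a)) set"
  assumes "X = TMS A" "sets M = sets (borel_X X)" "(F, u, v) \<in> null_patches G" "S \<in> sets M"
  shows "patch F v ` (S \<inter> patch_dom X F u v) \<in> sets M"
  using Psi_const_isoD(1)[OF Psi_const_iso_null_patch[OF assms(1-3)]] assms(4)
  unfolding borel_bij_def by blast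

lemma tail_rel_Psi_Image_in_sets:
  fixes A :: "('a::countable \<times> ('d::finite site \<Rightarrow> 'a)) set"
  assumes "X = TMS A" "sets M = sets (borel_X X)" "S \<in> sets M"
  shows "tail_rel_Psi X G `` S \<in> sets M"
  unfolding tail_rel_Psi_Image_eq
  by (rule sets.countable_UN''[OF countable_null_patches])
    (auto simp: image_patch_in_sets[OF assms(1,2) _ assms(3)])

section \<open>Conformality\<close>

lemma emeasure_image_eq_nn_integral_Psi:
  fixes X :: "('d::finite,'a::countable) config set" and G :: "'a \<Rightarrow> 'g::{ab_group_add,countable}"
  assumes sets_M: "sets M = sets (borel_X X)" and f: "partial_iso M (tail_rel X) B C f"
    and E: "E \<in> sets M" "E \<subseteq> B"
    and level: "\<And>c. emeasure M (f ` {x\<in>E. Psi G x (f x) = c}) = \<phi> c * emeasure M {x\<in>E. Psi G x (f x) = c}"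
  shows "emeasure M (f ` E) = (\<integral>\<^sup>+x. \<phi> (Psi G x (f x)) * indicator E x \<partial>M)"
proof -
  have bb: "borel_bij M B C f" using f unfolding partial_iso_def by blast
  define E_c where "E_c c = {x\<in>E. Psi G x (f x) = c}" for c
  have "E_c c = E \<inter> {x\<in>B. Psi G x (f x) = c}" for c unfolding E_c_def using E(2) by blast
  moreover have "{x\<in>B. Psi G x (f x) = c} \<in> sets M" for c by (rule Psi_level_set_in_sets[OF sets_M f])
  ultimately have E_c: "E_c c \<in> sets M" "E_c c \<subseteq> B" for c using E by auto
  have f_E_c: "f ` E_c c \<in> sets M" for c using bb E_c unfolding borel_bij_def by blast
  have "disjoint_family (\<lambda>c. f ` E_c c)"
    using bb E_c(2) unfolding disjoint_family_on_def E_c_def borel_bij_def bij_betw_def inj_on_def by blast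
  then have "emeasure M (\<Union>c. f ` E_c c) = (\<integral>\<^sup>+c. emeasure M (f ` E_c c) \<partial>count_space UNIV)"
    by (intro emeasure_UN_countable f_E_c) simp_all
  moreover have "f ` E = (\<Union>c. f ` E_c c)" unfolding E_c_def by blast
  ultimately have "emeasure M (f ` E) = (\<integral>\<^sup>+c. emeasure M (f ` E_c c) \<partial>count_space UNIV)" by simp
  also have "\<dots> = (\<integral>\<^sup>+c. (\<integral>\<^sup>+x. \<phi> c * indicator (E_c c) x \<partial>M) \<partial>count_space UNIV)"
    using level E_c(1) unfolding E_c_def by (simp add: nn_integral_cmult_indicator)
  also have "\<dots> = (\<integral>\<^sup>+x. (\<integral>\<^sup>+c. \<phi> c * indicator (E_c c) x \<partial>count_space UNIV) \<partial>M)"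
    by (rule nn_integral_count_space_nn_integral[symmetric]) (use E_c(1) in auto)
  also have "\<dots> = (\<integral>\<^sup>+x. \<phi> (Psi G x (f x)) * indicator E x \<partial>M)"
  proof (rule nn_integral_cong)
    fix x
    have "(\<lambda>c. \<phi> c * indicator (E_c c) x) = (\<lambda>c. \<phi> (Psi G x (f x)) * indicator E x * indicator {Psi G x (f x)} c)"
      unfolding E_c_def by (auto simp: fun_eq_iff split: split_indicator)
    then show "(\<integral>\<^sup>+c. \<phi> c * indicator (E_c c) x \<partial>count_space UNIV) = \<phi> (Psi G x (f x)) * indicator E x"
      by (simp add: nn_integral_cmult_indicator)
  qed
  finally show ?thesis .
qed

locale tail_Psi_ergodic =
  fixes adm :: "('a::countable \<times> ('d::finite site \<Rightarrow> 'a)) set"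
    and X :: "('d,'a) config set"
    and G :: "'a \<Rightarrow> 'g::{ab_group_add, countable}"
    and p :: "('d,'a) config measure"
  assumes X_def: "X = TMS adm"
    and prob: "prob_space p"
    and sets_p: "sets p = sets (borel_X X)"
    and nonsing: "nonsingular p (tail_rel X)"
    and inv: "invariant p (tail_rel_Psi X G)"
    and erg: "ergodic p (tail_rel_Psi X G)"
begin

sublocale prob_space p by (rule prob)

lemma space_p [simp]: "space p = X"
  using sets_eq_imp_space_eq[OF sets_p] by simp

lemma emeasure_Psi_const_iso_0_image:
  "Psi_const_iso p X G 0 f B C \<Longrightarrow> A \<in> sets p \<Longrightarrow> A \<subseteq> B \<Longrightarrow> emeasure p (f ` A) = emeasure p A"
  using inv unfolding invariant_def partial_iso_tail_rel_Psi_iff by blast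

lemma emeasure_Psi_const_iso_image_eq_0_iff:
  assumes f: "Psi_const_iso p X G c f B C" and A: "A \<in> sets p" "A \<subseteq> B"
  shows "emeasure p (f ` A) = 0 \<longleftrightarrow> emeasure p A = 0"
proof -
  have fA: "f ` A \<in> sets p" using Psi_const_isoD(1)[OF f] A unfolding borel_bij_def by blast
  have sub: "f ` A \<subseteq> tail_rel X `` A" "A \<subseteq> tail_rel X `` (f ` A)"
    using Psi_const_isoD(2)[OF f] A(2) tail_rel_sym by blast+
  have null: "tail_rel X `` N \<in> null_sets p" if "N \<in> sets p" "emeasure p N = 0" for N
    using nonsing that unfolding nonsingular_def by blast
  show ?thesis
  proof
    assume "emeasure p (f ` A) = 0"
    from null_sets_subset[OF null[OF fA this] A(1) sub(2)] show "emeasure p A = 0" by blast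
  next
    assume "emeasure p A = 0"
    from null_sets_subset[OF null[OF A(1) this] fA sub(1)] show "emeasure p (f ` A) = 0" by blast
  qed
qed

lemma emeasure_tail_rel_Psi_Image:
  assumes S: "S \<in> sets p" "0 < emeasure p S"
  shows "emeasure p (tail_rel_Psi X G `` S) = 1"
proof -
  let ?R = "tail_rel_Psi X G"
  have sat: "?R `` S \<in> sets p" by (rule tail_rel_Psi_Image_in_sets[OF X_def sets_p S(1)])
  have "\<forall>x y. x \<in> ?R `` S \<longrightarrow> (x, y) \<in> ?R \<longrightarrow> y \<in> ?R `` S"
    by (meson ImageE ImageI tail_rel_Psi_trans)
  then have "emeasure p (?R `` S) = 0 \<or> emeasure p (?R `` S) = 1"
    using erg[unfolded ergodic_def, rule_format, OF sat] by blast
  moreover have "S \<subseteq> ?R `` S"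
  proof
    fix x assume "x \<in> S"
    moreover have "x \<in> X" using sets.sets_into_space[OF S(1)] \<open>x \<in> S\<close> by auto
    ultimately show "x \<in> ?R `` S" using tail_rel_Psi_refl[of x X G] by blast
  qed
  then have "emeasure p S \<le> emeasure p (?R `` S)" using sat by (rule emeasure_mono)
  then have "emeasure p (?R `` S) \<noteq> 0" using S(2) by auto
  ultimately show ?thesis by blast
qed

text \<open>By ergodicity the saturation of \<open>S\<close> is conull, so one of the countably many patches
  with vanishing cocycle carries a positive part of \<open>S\<close> into \<open>T\<close>.\<close>

lemma exists_null_patch_into:
  assumes S: "S \<in> sets p" "0 < emeasure p S" and T: "T \<in> sets p" "0 < emeasure p T"
  obtains F u v where "(F, u, v) \<in> null_patches G" "0 < emeasure p (T \<inter> patch F v ` (S \<inter> patch_dom X F u v))"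
proof -
  let ?P = "\<lambda>(F, u, v). T \<inter> patch F v ` (S \<inter> patch_dom X F u v)"
  have P_sets: "?P i \<in> sets p" if "i \<in> null_patches G" for i
  proof -
    obtain F u v where i: "i = (F, u, v)" by (cases i)
    then show ?thesis using image_patch_in_sets[OF X_def sets_p that[unfolded i] S(1)] T(1) by auto
  qed
  have sat: "tail_rel_Psi X G `` S \<in> sets p" by (rule tail_rel_Psi_Image_in_sets[OF X_def sets_p S(1)])
  have "emeasure p (space p - tail_rel_Psi X G `` S) = 0"
    using emeasure_compl[OF sat] emeasure_tail_rel_Psi_Image[OF S] emeasure_space_1 by simp
  then have "space p - tail_rel_Psi X G `` S \<in> null_sets p"
    using sets.compl_sets[OF sat] by (auto intro: null_setsI)
  then have N: "T - tail_rel_Psi X G `` S \<in> null_sets p"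
    by (rule null_sets_subset) (use T(1) sat sets.sets_into_space[OF T(1)] in auto)
  have "emeasure p (T \<inter> tail_rel_Psi X G `` S) = emeasure p T"
    using emeasure_Diff_null_set[OF N T(1)] by (simp add: Diff_Diff_Int)
  also have "T \<inter> tail_rel_Psi X G `` S = (\<Union>i\<in>null_patches G. ?P i)"
    unfolding tail_rel_Psi_Image_eq by auto
  finally have "(\<Union>i\<in>null_patches G. ?P i) \<notin> null_sets p" using T(2) by auto
  then obtain i where i: "i \<in> null_patches G" "?P i \<notin> null_sets p"
    using null_sets_UN'[OF countable_null_patches[of G], of ?P p] P_sets by blast
  then show ?thesis
    using that P_sets[OF i(1)] by (cases i) (auto simp: zero_less_iff_neq_zero)
qed

lemma exists_Psi_const_iso_0_between:
  assumes S: "S \<in> sets p" "0 < emeasure p S" and T: "T \<in> sets p" "0 < emeasure p T"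
  obtains Q P \<tau> where "Q \<subseteq> S" "P \<subseteq> T" "Q \<in> sets p" "P \<in> sets p" "Psi_const_iso p X G 0 \<tau> Q P"
    "0 < emeasure p Q" "emeasure p Q = emeasure p P"
proof -
  obtain F u v where Fuv: "(F, u, v) \<in> null_patches G"
    and P_pos: "0 < emeasure p (T \<inter> patch F v ` (S \<inter> patch_dom X F u v))"
    using exists_null_patch_into[OF S T] by blast
  note iso = Psi_const_iso_null_patch[OF X_def sets_p Fuv]
  define P where "P = T \<inter> patch F v ` (S \<inter> patch_dom X F u v)"
  define Q where "Q = patch F v -` P \<inter> patch_dom X F u v \<inter> S"
  have P_sets: "P \<in> sets p"
    unfolding P_def using image_patch_in_sets[OF X_def sets_p Fuv S(1)] T(1) by blast
  have Q_sets: "Q \<in> sets p"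
    using Psi_const_isoD(1)[OF iso] P_sets S(1) unfolding Q_def borel_bij_def by blast
  have QP: "patch F v ` Q = P" unfolding P_def Q_def by auto
  have "Psi_const_iso p X G 0 (patch F v) Q (patch F v ` Q)"
    by (rule Psi_const_iso_restrict[OF iso Q_sets]) (auto simp: Q_def)
  then have Q_iso: "Psi_const_iso p X G 0 (patch F v) Q P" unfolding QP .
  have "emeasure p Q = emeasure p P"
    using emeasure_Psi_const_iso_0_image[OF Q_iso Q_sets order_refl] QP by simp
  moreover have "0 < emeasure p Q" using P_pos calculation unfolding P_def by simp
  moreover have "Q \<subseteq> S" "P \<subseteq> T" unfolding Q_def P_def by auto
  ultimately show ?thesis using that[of Q P "patch F v"] Q_sets P_sets Q_iso by blast
qed

lemma emeasure_image_eq_if_Psi_const_iso_0: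
  assumes f1: "Psi_const_iso p X G c f1 B1 C1" and f2: "Psi_const_iso p X G c f2 B2 C2"
    and \<tau>: "Psi_const_iso p X G 0 \<tau> Q P" and QP: "Q \<subseteq> B2" "P \<subseteq> B1"
  shows "emeasure p (f1 ` P) = emeasure p (f2 ` Q)"
proof -
  have Q: "Q \<in> sets p" and P: "P \<in> sets p"
    using Psi_const_isoD(1)[OF \<tau>] unfolding borel_bij_def by auto
  have "Psi_const_iso p X G (- c) (the_inv_into Q f2) (f2 ` Q) Q"
    by (rule Psi_const_iso_inv[OF Psi_const_iso_restrict[OF f2 Q QP(1)]])
  moreover have "Psi_const_iso p X G (0 + c) (f1 \<circ> \<tau>) Q (f1 ` P)"
    by (rule Psi_const_iso_comp[OF \<tau> Psi_const_iso_restrict[OF f1 P QP(2)]])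
  ultimately have "Psi_const_iso p X G (- c + (0 + c)) (f1 \<circ> \<tau> \<circ> the_inv_into Q f2) (f2 ` Q) (f1 ` P)"
    by (rule Psi_const_iso_comp)
  then have \<phi>: "Psi_const_iso p X G 0 (f1 \<circ> \<tau> \<circ> the_inv_into Q f2) (f2 ` Q) (f1 ` P)" by simp
  have "f2 ` Q \<in> sets p"
    using Psi_const_isoD(1)[OF Psi_const_iso_restrict[OF f2 Q QP(1)]] unfolding borel_bij_def by auto
  then show ?thesis
    using emeasure_Psi_const_iso_0_image[OF \<phi> _ order_refl] Psi_const_iso_image[OF \<phi>] by simp
qed

text \<open>The density of \<open>p \<circ> f\<close> on \<open>B\<close> is a.e. constant because, by the two previous lemmas,
  it satisfies the homogeneity hypothesis of \<open>AE_le_const_if_homogeneous\<close>.\<close>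

lemma emeasure_Psi_const_iso_image:
  assumes f: "Psi_const_iso p X G c f B C" and B_pos: "0 < emeasure p B"
    and A: "A \<in> sets p" "A \<subseteq> B"
  shows "emeasure p (f ` A) = ennreal (measure p C / measure p B) * emeasure p A"
proof -
  have bb: "borel_bij p B C f" by (rule Psi_const_isoD(1)[OF f])
  have B: "B \<in> sets p" and fB: "f ` B = C" using bb unfolding borel_bij_def bij_betw_def by auto
  obtain g where g_meas[measurable]: "g \<in> borel_measurable p"
    and g: "\<And>E. E \<in> sets p \<Longrightarrow> (\<integral>\<^sup>+x\<in>E. g x \<partial>p) = emeasure p (f ` (E \<inter> B))"
    using exists_density_of_image[OF bb] emeasure_Psi_const_iso_image_eq_0_iff[OF f] by blast
  define k where "k = ennreal (measure p C / measure p B)"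
  have "measure p B > 0" using B_pos by (simp add: emeasure_eq_measure)
  then have "k * emeasure p B = emeasure p C"
    unfolding k_def by (simp add: emeasure_eq_measure ennreal_mult''[symmetric])
  then have avg: "(\<integral>\<^sup>+x\<in>B. g x \<partial>p) = k * emeasure p B" using g[OF B] fB by simp
  have k: "k \<noteq> \<infinity>" unfolding k_def by simp
  have "AE x in p. x \<in> B \<longrightarrow> g x \<le> k"
  proof (rule AE_le_const_if_homogeneous[OF finite_measure_axioms g_meas B avg k])
    fix S T assume S: "S \<in> sets p" "T \<in> sets p" "S \<subseteq> B" "T \<subseteq> B" "0 < emeasure p S" "0 < emeasure p T"
    obtain Q P \<tau> where QP: "Q \<subseteq> S" "P \<subseteq> T" "Q \<in> sets p" "P \<in> sets p" "Psi_const_iso p X G 0 \<tau> Q P"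
      "0 < emeasure p Q" "emeasure p Q = emeasure p P"
      using exists_Psi_const_iso_0_between[OF S(1,5) S(2,6)] by blast
    have "emeasure p (f ` P) = emeasure p (f ` Q)"
      by (rule emeasure_image_eq_if_Psi_const_iso_0[OF f f QP(5)]) (use QP S in auto)
    then have "(\<integral>\<^sup>+x\<in>Q. g x \<partial>p) = (\<integral>\<^sup>+x\<in>P. g x \<partial>p)"
      using g[OF QP(3)] g[OF QP(4)] QP(1,2) S(3,4) by (simp add: Int_absorb2)
    then show "\<exists>Q P. Q \<subseteq> S \<and> P \<subseteq> T \<and> Q \<in> sets p \<and> P \<in> sets p \<and> 0 < emeasure p Q \<and>
        emeasure p Q = emeasure p P \<and> (\<integral>\<^sup>+x\<in>Q. g x \<partial>p) = (\<integral>\<^sup>+x\<in>P. g x \<partial>p)"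
      using QP by blast
  qed
  then have "AE x in p. x \<in> B \<longrightarrow> g x = k"
    by (rule AE_eq_const_if_AE_le_const[OF finite_measure_axioms g_meas B avg k])
  then have "(\<integral>\<^sup>+x\<in>A. g x \<partial>p) = (\<integral>\<^sup>+x\<in>A. k \<partial>p)"
    by (rule nn_integral_cong_AE[OF eventually_mono]) (use A(2) in \<open>auto split: split_indicator\<close>)
  then show ?thesis
    using g[OF A(1)] A by (simp add: Int_absorb2 nn_integral_cmult_indicator k_def)
qed

lemma emeasure_Psi_const_iso_codomain_pos:
  assumes f: "Psi_const_iso p X G c f B C" and "0 < emeasure p B"
  shows "0 < emeasure p C"
proof -
  have "B \<in> sets p" using Psi_const_isoD(1)[OF f] unfolding borel_bij_def by blast
  then show ?thesis
    using emeasure_Psi_const_iso_image_eq_0_iff[OF f _ order_refl] Psi_const_iso_image[OF f] assms(2)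
    by (simp add: zero_less_iff_neq_zero)
qed

lemma ennreal_mult_emeasure_cancel:
  assumes "0 \<le> a" "0 \<le> b" "0 < emeasure p E" "ennreal a * emeasure p E = ennreal b * emeasure p E"
  shows "a = b"
proof -
  have "measure p E > 0" using assms(3) by (simp add: emeasure_eq_measure)
  moreover have "a * measure p E = b * measure p E"
    using assms(1,2,4) by (simp add: emeasure_eq_measure ennreal_mult''[symmetric])
  ultimately show ?thesis by simp
qed

text \<open>\<open>Psi_ratio c\<close> is the constant value of \<open>d(p \<circ> f)/dp\<close> shared by all partial isomorphisms
  along which the cocycle is \<open>c\<close> (\<open>Psi_ratio_eq\<close>); the homomorphism \<open>H\<close> extends its logarithm.\<close>

definition Psi_values :: "'g set" where
  "Psi_values = {c. \<exists>f B C. Psi_const_iso p X G c f B C \<and> 0 < emeasure p B}"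

definition Psi_ratio :: "'g \<Rightarrow> real" where
  "Psi_ratio c = (SOME r. \<exists>f B C. Psi_const_iso p X G c f B C \<and> 0 < emeasure p B \<and> r = measure p C / measure p B)"

lemma Psi_const_iso_ratio_unique:
  assumes f1: "Psi_const_iso p X G c f1 B1 C1" "0 < emeasure p B1"
    and f2: "Psi_const_iso p X G c f2 B2 C2" "0 < emeasure p B2"
  shows "measure p C1 / measure p B1 = measure p C2 / measure p B2"
proof -
  have B1: "B1 \<in> sets p" and B2: "B2 \<in> sets p"
    using Psi_const_isoD(1)[OF f1(1)] Psi_const_isoD(1)[OF f2(1)] unfolding borel_bij_def by auto
  obtain Q P \<tau> where QP: "Q \<subseteq> B2" "P \<subseteq> B1" "Q \<in> sets p" "P \<in> sets p" "Psi_const_iso p X G 0 \<tau> Q P"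
    "0 < emeasure p Q" "emeasure p Q = emeasure p P"
    using exists_Psi_const_iso_0_between[OF B2 f2(2) B1 f1(2)] by blast
  have "ennreal (measure p C1 / measure p B1) * emeasure p P = emeasure p (f1 ` P)"
    using emeasure_Psi_const_iso_image[OF f1 QP(4,2)] by simp
  also have "\<dots> = emeasure p (f2 ` Q)"
    by (rule emeasure_image_eq_if_Psi_const_iso_0[OF f1(1) f2(1) QP(5,1,2)])
  also have "\<dots> = ennreal (measure p C2 / measure p B2) * emeasure p P"
    using emeasure_Psi_const_iso_image[OF f2 QP(3,1)] QP(7) by simp
  finally show ?thesis
    using ennreal_mult_emeasure_cancel QP(6,7) by simp
qed

lemma Psi_ratio_eq:
  assumes "Psi_const_iso p X G c f B C" "0 < emeasure p B"
  shows "Psi_ratio c = measure p C / measure p B"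
proof -
  have "\<exists>f B C. Psi_const_iso p X G c f B C \<and> 0 < emeasure p B \<and> Psi_ratio c = measure p C / measure p B"
    unfolding Psi_ratio_def by (rule someI_ex) (use assms in blast)
  then show ?thesis using Psi_const_iso_ratio_unique assms by metis
qed

lemma Psi_ratio_pos: "c \<in> Psi_values \<Longrightarrow> 0 < Psi_ratio c"
  unfolding Psi_values_def
  using Psi_ratio_eq emeasure_Psi_const_iso_codomain_pos by (fastforce simp: emeasure_eq_measure)

lemma Psi_values_zero: "0 \<in> Psi_values"
proof -
  have "X \<in> sets p" using sets.top[of p] by simp
  then have "Psi_const_iso p X G 0 id X X"
    by (intro Psi_const_isoI borel_bij_id) (simp_all add: tail_rel_refl Psi_def)
  then show ?thesis unfolding Psi_values_def using emeasure_space_1 by fastforce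
qed

lemma Psi_values_uminus: "c \<in> Psi_values \<Longrightarrow> - c \<in> Psi_values"
  unfolding Psi_values_def using Psi_const_iso_inv emeasure_Psi_const_iso_codomain_pos by blast

lemma Psi_values_add:
  assumes "c1 \<in> Psi_values" "c2 \<in> Psi_values"
  shows "c1 + c2 \<in> Psi_values \<and> Psi_ratio (c1 + c2) = Psi_ratio c1 * Psi_ratio c2"
proof -
  obtain f1 B1 C1 f2 B2 C2 where f1: "Psi_const_iso p X G c1 f1 B1 C1" "0 < emeasure p B1"
    and f2: "Psi_const_iso p X G c2 f2 B2 C2" "0 < emeasure p B2"
    using assms unfolding Psi_values_def by blast
  have B2: "B2 \<in> sets p" and C1: "C1 \<in> sets p"
    using Psi_const_isoD(1)[OF f1(1)] Psi_const_isoD(1)[OF f2(1)] unfolding borel_bij_def by auto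
  obtain Q P \<tau> where QP: "Q \<subseteq> C1" "P \<subseteq> B2" "Q \<in> sets p" "P \<in> sets p" "Psi_const_iso p X G 0 \<tau> Q P"
    "0 < emeasure p Q" "emeasure p Q = emeasure p P"
    using exists_Psi_const_iso_0_between[OF C1 emeasure_Psi_const_iso_codomain_pos[OF f1] B2 f2(2)] by blast
  define D where "D = the_inv_into B1 f1 ` Q"
  have \<psi>: "Psi_const_iso p X G (c1 + c2) (f2 \<circ> \<tau> \<circ> f1) D (f2 ` P)" and f1D: "f1 ` D = Q"
    and "D \<subseteq> B1"
    using Psi_const_iso_comp_via[OF f1(1) QP(5) f2(1) QP(1,2)] unfolding D_def by blast+
  moreover have "D \<in> sets p" using Psi_const_isoD(1)[OF \<psi>] unfolding borel_bij_def by blast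
  ultimately have D: "D \<in> sets p" "D \<subseteq> B1" by blast+
  have D_pos: "0 < emeasure p D"
    using emeasure_Psi_const_iso_image_eq_0_iff[OF f1(1) D] f1D QP(6) by (simp add: zero_less_iff_neq_zero)
  have sum: "c1 + c2 \<in> Psi_values" unfolding Psi_values_def using \<psi> D_pos by blast
  have "ennreal (Psi_ratio (c1 + c2)) * emeasure p D = emeasure p (f2 ` P)"
    using emeasure_Psi_const_iso_image[OF \<psi> D_pos D(1) order_refl] Psi_ratio_eq[OF \<psi> D_pos]
      Psi_const_iso_image[OF \<psi>] by simp
  also have "\<dots> = ennreal (Psi_ratio c2) * emeasure p (f1 ` D)"
    using emeasure_Psi_const_iso_image[OF f2 QP(4,2)] Psi_ratio_eq[OF f2] f1D QP(7) by simp
  also have "emeasure p (f1 ` D) = ennreal (Psi_ratio c1) * emeasure p D"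
    using emeasure_Psi_const_iso_image[OF f1 D] Psi_ratio_eq[OF f1] by simp
  also have "ennreal (Psi_ratio c2) * (ennreal (Psi_ratio c1) * emeasure p D) =
      ennreal (Psi_ratio c1 * Psi_ratio c2) * emeasure p D"
    using Psi_ratio_pos[OF assms(1)] Psi_ratio_pos[OF assms(2)] by (simp add: ennreal_mult mult_ac)
  finally have eq: "ennreal (Psi_ratio (c1 + c2)) * emeasure p D =
      ennreal (Psi_ratio c1 * Psi_ratio c2) * emeasure p D" .
  have "0 \<le> Psi_ratio (c1 + c2)" "0 \<le> Psi_ratio c1 * Psi_ratio c2"
    using Psi_ratio_pos[OF sum] Psi_ratio_pos[OF assms(1)] Psi_ratio_pos[OF assms(2)] by simp_all
  then show ?thesis using ennreal_mult_emeasure_cancel[OF _ _ D_pos eq] sum by blast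
qed

lemma add_subgroup_Psi_values: "add_subgroup Psi_values"
  unfolding add_subgroup_def using Psi_values_zero Psi_values_add Psi_values_uminus by blast

lemma additive_on_ln_Psi_ratio: "additive_on Psi_values (\<lambda>c. ln (Psi_ratio c))"
  unfolding additive_on_def
proof (intro ballI)
  fix a b assume "a \<in> Psi_values" "b \<in> Psi_values"
  then have "Psi_ratio (a + b) = Psi_ratio a * Psi_ratio b" "0 < Psi_ratio a" "0 < Psi_ratio b"
    using Psi_values_add Psi_ratio_pos by blast+
  then show "ln (Psi_ratio (a + b)) = ln (Psi_ratio a) + ln (Psi_ratio b)" by (simp add: ln_mult)
qed

lemma conformal_if_extends_ln_Psi_ratio:
  assumes H: "\<And>c. c \<in> Psi_values \<Longrightarrow> H c = ln (Psi_ratio c)"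
  shows "conformal p (tail_rel X) (\<lambda>x y. H (Psi G x y))"
  unfolding conformal_def
proof (intro allI impI ballI)
  fix B C f E assume f: "partial_iso p (tail_rel X) B C f" and E: "E \<in> sets p" "E \<subseteq> B"
  show "emeasure p (f ` E) = (\<integral>\<^sup>+x. ennreal (exp (H (Psi G x (f x)))) * indicator E x \<partial>p)"
  proof (rule emeasure_image_eq_nn_integral_Psi[OF sets_p f E])
    fix c
    define E_c where "E_c = {x\<in>E. Psi G x (f x) = c}"
    have "E_c = E \<inter> {x\<in>B. Psi G x (f x) = c}" unfolding E_c_def using E(2) by blast
    then have E_c: "E_c \<in> sets p" "E_c \<subseteq> B" using E Psi_level_set_in_sets[OF sets_p f, of G c] by auto
    have iso: "Psi_const_iso p X G c f E_c (f ` E_c)"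
      using borel_bij_restrict[OF _ E_c] f E(2) unfolding E_c_def partial_iso_def
      by (intro Psi_const_isoI) auto
    show "emeasure p (f ` E_c) = ennreal (exp (H c)) * emeasure p E_c"
    proof (cases "emeasure p E_c = 0")
      case True
      then show ?thesis using emeasure_Psi_const_iso_image_eq_0_iff[OF iso E_c(1) order_refl] by simp
    next
      case False
      then have pos: "0 < emeasure p E_c" by (simp add: zero_less_iff_neq_zero)
      then have "c \<in> Psi_values" unfolding Psi_values_def using iso by blast
      then have "exp (H c) = Psi_ratio c" using H Psi_ratio_pos by simp
      then show ?thesis
        using emeasure_Psi_const_iso_image[OF iso pos E_c(1) order_refl] Psi_ratio_eq[OF iso pos] by simp
    qed
  qed
qed

lemma exists_additive_conformal:
  "\<exists>H :: 'g \<Rightarrow> real. (\<forall>a b. H (a + b) = H a + H b) \<and> conformal p (tail_rel X) (\<lambda>x y. H (Psi G x y))"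
proof -
  obtain H :: "'g \<Rightarrow> real" where "\<And>a b. H (a + b) = H a + H b" "\<And>c. c \<in> Psi_values \<Longrightarrow> H c = ln (Psi_ratio c)"
    using additive_on_extend_countable[OF add_subgroup_Psi_values additive_on_ln_Psi_ratio] by blast
  then show ?thesis using conformal_if_extends_ln_Psi_ratio by blast
qed

end

theorem theorem1:
  fixes A :: "('a::finite \<times> ('d::finite site \<Rightarrow> 'a)) set"
    and X :: "('d,'a) config set"
    and G :: "'a \<Rightarrow> 'g::{ab_group_add, countable}"
    and p :: "('d,'a) config measure"
  assumes X_def: "X = TMS A"
    and irr: "irreducible_TMS X"
    and trans: "top_transitive X (tail_rel X)"
    and prob: "prob_space p"
    and borel: "sets p = sets (borel_X X)"
    and glob: "global_measure X p"
    and nonsing: "nonsingular p (tail_rel X)"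
    and inv: "invariant p (tail_rel_Psi X G)"
    and erg: "ergodic p (tail_rel_Psi X G)"
  shows "\<exists>H :: 'g \<Rightarrow> real. (\<forall>a b. H (a + b) = H a + H b) \<and>
           conformal p (tail_rel X) (\<lambda>x y. H (Psi G x y))"
proof -
  interpret tail_Psi_ergodic A X G p
    by (rule tail_Psi_ergodic.intro[OF X_def prob borel nonsing inv erg])
  show ?thesis by (rule exists_additive_conformal)
qed

end
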